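(* The restrictions $\iota_{1\otimes2}:\mathcal B^0\to S^0(A^{(1)}_{1\otimes2})\otimes S^0(A^{(2)}_{1\otimes2})$ and $\iota_{2\otimes1}:\mathcal B^0\to S^0(A^{(2)}_{2\otimes1})\otimes S^0(A^{(1)}_{2\otimes1})$ are both isomorphisms of algebras with respect to the shuffle product.
   Context: Forms: $\zeta_i=dz_i/z_i$, $\zeta_{ii}=dz_i/(1-z_i)$ ($i=1,2$), $\zeta_{12}=d(z_1z_2)/(1-z_1z_2)$, $\zeta^{(1)}_{12}=z_2dz_1/(1-z_1z_2)$, $\zeta^{(2)}_{12}=z_1dz_2/(1-z_1z_2)$. For an alphabet $B$, $S(B)$ is the vector space with basis the words in $B$ (empty word $\mathbf 1$), with concatenation $\circ$, shuffle product ($\mathbf 1⧢w=w⧢\mathbf 1=w$, $(a\circ u)⧢(b\circ v)=a\circ(u⧢(b\circ v))+b\circ((a\circ u)⧢v)$) and coproduct $\Delta^*(\omega_1\circ\cdots\circ\omega_s)=\sum_{l=0}^s(\omega_1\circ\cdots\circ\omega_l)\otimes(\omega_{l+1}\circ\cdots\circ\omega_s)$. $A=\{\zeta_1,\zeta_{11},\zeta_2,\zeta_{22},\zeta_{12}\}$, $A^{(1)}_{1\otimes2}=\{\zeta_1,\zeta_{11},\zeta^{(1)}_{12}\}$, $A^{(2)}_{1\otimes2}=\{\zeta_2,\zeta_{22}\}$, $A^{(2)}_{2\otimes1}=\{\zeta_2,\zeta_{22},\zeta^{(2)}_{12}\}$, $A^{(1)}_{2\otimes1}=\{\zeta_1,\zeta_{11}\}$;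 $S^0(\cdot)$ is the span of words not ending with $\zeta_1$ or $\zeta_2$. $\mathcal B$ is the span of homogeneous elements $\sum_Ic_I\omega_{i_1}\circ\cdots\circ\omega_{i_s}$ of $S(A)$ with $\sum_Ic_I\omega_{i_1}\otimes\cdots\otimes(\omega_{i_l}\wedge\omega_{i_{l+1}})\otimes\cdots\otimes\omega_{i_s}=0$ for all $1\le l<s$ (Chen's integrability condition); $\mathcal B^0\subset\mathcal B$ consists of elements none of whose words ends with $\zeta_1$ or $\zeta_2$. For $\{i_1,i_2\}=\{1,2\}$, $\Pr^{(i_1)}_{i_1\otimes i_2}:S(A)\to S(A^{(i_1)}_{i_1\otimes i_2})$ replaces each letter by its restriction to $dz_{i_2}=0$ ($\zeta_{i_1}\mapsto\zeta_{i_1}$, $\zeta_{i_1i_1}\mapsto\zeta_{i_1i_1}$, $\zeta_{12}\mapsto\zeta^{(i_1)}_{12}$, $\zeta_{i_2},\zeta_{i_2i_2}\mapsto0$), $\Pr^{(i_2)}_{i_1\otimes i_2}:S(A)\to S(A^{(i_2)}_{i_1\otimes i_2})$ fixes words in $\zeta_{i_2},\zeta_{i_2i_2}$ and kills all other words, and $\iota_{i_1\otimes i_2}=(\Pr^{(i_1)}_{i_1\otimes i_2}\otimes\Pr^{(i_2)}_{i_1\otimes i_2})\circ\Delta^*|_{\mathcal B}$. *)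

theory Defs
  imports Complex_Main
begin

text \<open>Z1 = zeta_1, Z11 = zeta_11, Z2 = zeta_2, Z22 = zeta_22, Z12 = zeta_12,
  Z12a = zeta_12^(1) = z2 dz1/(1-z1z2), Z12b = zeta_12^(2) = z1 dz2/(1-z1z2).\<close>

datatype letter = Z1 | Z11 | Z2 | Z22 | Z12 | Z12a | Z12b

text \<open>A 1-form f dz1 + g dz2 is represented by the pair (f, g) of coefficient functions.\<close>
fun form :: "letter \<Rightarrow> complex \<times> complex \<Rightarrow> complex \<times> complex" where
  "form Z1 (z1, z2) = (1 / z1, 0)"
| "form Z11 (z1, z2) = (1 / (1 - z1), 0)"
| "form Z2 (z1, z2) = (0, 1 / z2)"
| "form Z22 (z1, z2) = (0, 1 / (1 - z2))"
| "form Z12 (z1, z2) = (z2 / (1 - z1 * z2), z1 / (1 - z1 * z2))"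
| "form Z12a (z1, z2) = (z2 / (1 - z1 * z2), 0)"
| "form Z12b (z1, z2) = (0, z1 / (1 - z1 * z2))"

definition Dom :: "(complex \<times> complex) set" where
  "Dom = {(z1, z2). z1 \<noteq> 0 \<and> z2 \<noteq> 0 \<and> z1 \<noteq> 1 \<and> z2 \<noteq> 1 \<and> z1 * z2 \<noteq> 1}"

text \<open>Coefficient of dz1 /\ dz2 in the wedge product of two letters.\<close>
definition wedge :: "letter \<Rightarrow> letter \<Rightarrow> complex \<times> complex \<Rightarrow> complex" where
  "wedge a b z = fst (form a z) * snd (form b z) - snd (form a z) * fst (form b z)"

definition Aset :: "letter set" where
  "Aset = {Z1, Z11, Z2, Z22, Z12}"

type_synonym lin = "letter list \<Rightarrow> complex"
type_synonym tens = "letter list \<times> letter list \<Rightarrow> complex"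

definition supp :: "('a \<Rightarrow> complex) \<Rightarrow> 'a set" where
  "supp x = {w. x w \<noteq> 0}"

definition delta :: "'a \<Rightarrow> 'a \<Rightarrow> complex" where
  "delta u = (\<lambda>w. if w = u then 1 else 0)"

definition prepend :: "letter \<Rightarrow> lin \<Rightarrow> lin" where
  "prepend a f = (\<lambda>w. case w of [] \<Rightarrow> 0 | c # w' \<Rightarrow> if c = a then f w' else 0)"

fun shw :: "letter list \<Rightarrow> letter list \<Rightarrow> lin" where
  "shw [] v = delta v"
| "shw u [] = delta u"
| "shw (a # u) (b # v) = (\<lambda>w. prepend a (shw u (b # v)) w + prepend b (shw (a # u) v) w)"

definition shuffle :: "lin \<Rightarrow> lin \<Rightarrow> lin" where
  "shuffle x y = (\<lambda>w. \<Sum>(u, v) \<in> supp x \<times> supp y. x u * y v * shw u v w)"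

definition tshuffle :: "tens \<Rightarrow> tens \<Rightarrow> tens" where
  "tshuffle X Y = (\<lambda>(p, q). \<Sum>((u1, v1), (u2, v2)) \<in> supp X \<times> supp Y.
       X (u1, v1) * Y (u2, v2) * shw u1 u2 p * shw v1 v2 q)"

definition unit_S :: lin where "unit_S = delta []"
definition unit_T :: tens where "unit_T = delta ([], [])"

definition coprod :: "lin \<Rightarrow> tens" where
  "coprod x = (\<lambda>(p, q). x (p @ q))"

text \<open>Letter-wise restriction maps (None = the letter restricts to 0).\<close>
fun mapw :: "(letter \<Rightarrow> letter option) \<Rightarrow> letter list \<Rightarrow> letter list option" where
  "mapw f [] = Some []"
| "mapw f (a # w) = (case (f a, mapw f w) of (Some b, Some w') \<Rightarrow> Some (b # w') | _ \<Rightarrow> None)"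

definition proj_tensor :: "(letter \<Rightarrow> letter option) \<Rightarrow> (letter \<Rightarrow> letter option) \<Rightarrow> tens \<Rightarrow> tens" where
  "proj_tensor f g X = (\<lambda>(p, q). \<Sum>(u, v) \<in> {(u, v) \<in> supp X. mapw f u = Some p \<and> mapw g v = Some q}. X (u, v))"

definition iota :: "(letter \<Rightarrow> letter option) \<Rightarrow> (letter \<Rightarrow> letter option) \<Rightarrow> lin \<Rightarrow> tens" where
  "iota f g x = proj_tensor f g (coprod x)"

text \<open>Pr^(1)_{1(x)2}: restriction to dz2 = 0.\<close>
fun pr1_12 :: "letter \<Rightarrow> letter option" where
  "pr1_12 Z1 = Some Z1" | "pr1_12 Z11 = Some Z11" | "pr1_12 Z12 = Some Z12a" | "pr1_12 _ = None"
fun pr2_12 :: "letter \<Rightarrow> letter option" where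
  "pr2_12 Z2 = Some Z2" | "pr2_12 Z22 = Some Z22" | "pr2_12 _ = None"
text \<open>Pr^(2)_{2(x)1}: restriction to dz1 = 0.\<close>
fun pr2_21 :: "letter \<Rightarrow> letter option" where
  "pr2_21 Z2 = Some Z2" | "pr2_21 Z22 = Some Z22" | "pr2_21 Z12 = Some Z12b" | "pr2_21 _ = None"
fun pr1_21 :: "letter \<Rightarrow> letter option" where
  "pr1_21 Z1 = Some Z1" | "pr1_21 Z11 = Some Z11" | "pr1_21 _ = None"

definition S0word :: "letter list \<Rightarrow> bool" where
  "S0word w \<longleftrightarrow> w = [] \<or> last w \<notin> {Z1, Z2}"

definition S_space :: "letter set \<Rightarrow> lin set" where
  "S_space B = {x. finite (supp x) \<and> supp x \<subseteq> lists B}"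

definition tensor_S0 :: "letter set \<Rightarrow> letter set \<Rightarrow> tens set" where
  "tensor_S0 B1 B2 = {X. finite (supp X) \<and>
     (\<forall>(p, q) \<in> supp X. p \<in> lists B1 \<and> S0word p \<and> q \<in> lists B2 \<and> S0word q)}"

definition hcomp :: "nat \<Rightarrow> lin \<Rightarrow> lin" where
  "hcomp n x = (\<lambda>w. if length w = n then x w else 0)"

definition chen :: "nat \<Rightarrow> lin \<Rightarrow> bool" where
  "chen s y \<longleftrightarrow> (\<forall>l. 1 \<le> l \<and> l < s \<longrightarrow>
     (\<forall>u v. length u = l - 1 \<and> length v = s - l - 1 \<longrightarrow>
        (\<forall>z \<in> Dom. (\<Sum>a\<in>Aset. \<Sum>b\<in>Aset. y (u @ [a, b] @ v) * wedge a b z) = 0)))"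

definition B_space :: "lin set" where
  "B_space = {x \<in> S_space Aset. \<forall>n. chen n (hcomp n x)}"

definition B0_space :: "lin set" where
  "B0_space = {x \<in> B_space. \<forall>w \<in> supp x. S0word w}"

end

theory Submission
  imports Defs
begin

text \<open>The integrability condition, read letter by letter, says that a base letter \<open>\<beta>\<close> followed
  by a fibre letter \<open>\<phi>\<close> can be commuted at the cost of words carrying two fibre letters in
  their place: \<open>x(u \<beta> \<phi> v) = x(u \<phi> \<beta> v) + \<Sum> D x(u c d v)\<close>. This lowers the number of base
  letters or the number of inversions, so an element of \<open>B\<^sup>0\<close> is determined by its values on
  sorted words (fibre letters first), which are exactly the coefficients read off by \<open>\<iota>\<close>.
  Conversely, running the commutation relation as a recursion on words extends any tensor to
  an integrable element, so \<open>\<iota>\<close> is bijective; the end conditions of \<open>S\<^sup>0\<close> match because the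
  fibre letter excluded at the end commutes freely with base letters. Finally only sorted
  words shuffle into a sorted word, and there the shuffle factorises, so \<open>\<iota>\<close> is multiplicative.
  Both restrictions are instances of the same abstract situation, with the roles of \<open>z\<^sub>1\<close>
  and \<open>z\<^sub>2\<close> exchanged.\<close>

section \<open>Shuffles of words\<close>

declare shw.simps[simp del]

lemma shw_right_Nil: "shw u [] = delta u"
  by (cases u) (auto simp: shw.simps)

lemma shw_at_Nil[simp]: "shw s t [] = (if s = [] \<and> t = [] then 1 else 0)"
  by (cases s; cases t) (auto simp: delta_def prepend_def shw.simps)

lemma shw_at_Cons[simp]: "shw s t (c # w) =
   (case s of [] \<Rightarrow> 0 | a # s' \<Rightarrow> if a = c then shw s' t w else 0) +
   (case t of [] \<Rightarrow> 0 | b # t' \<Rightarrow> if b = c then shw s t' w else 0)"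
  by (cases s; cases t) (auto simp: delta_def prepend_def shw_right_Nil shw.simps)

lemma shw_len_set: "shw s t w \<noteq> 0 \<Longrightarrow> length w = length s + length t \<and> set w = set s \<union> set t"
proof (induction w arbitrary: s t)
  case Nil
  then show ?case by (auto split: if_splits)
next
  case (Cons c w)
  show ?case
  proof (cases "(case s of [] \<Rightarrow> 0 | a # s' \<Rightarrow> if a = c then shw s' t w else 0) \<noteq> 0")
    case True
    then obtain s' where "s = c # s'" "shw s' t w \<noteq> 0" by (auto split: list.splits if_splits)
    with Cons.IH[of s' t] show ?thesis by auto
  next
    case False
    with Cons.prems have "(case t of [] \<Rightarrow> 0 | b # t' \<Rightarrow> if b = c then shw s t' w else 0) \<noteq> 0"
      by simp
    then obtain t' where "t = c # t'" "shw s t' w \<noteq> 0" by (auto split: list.splits if_splits)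
    with Cons.IH[of s t'] show ?thesis by auto
  qed
qed

lemma shw_length: "shw s t w \<noteq> 0 \<Longrightarrow> length w = length s + length t"
  using shw_len_set by blast

lemma shw_set: "shw s t w \<noteq> 0 \<Longrightarrow> set w = set s \<union> set t"
  using shw_len_set by blast

lemma shw_comm: "shw s t w = shw t s w"
  by (induction w arbitrary: s t) (auto split: list.splits)

lemma shw_last: "shw s t w \<noteq> 0 \<Longrightarrow> w \<noteq> [] \<Longrightarrow>
    (s \<noteq> [] \<and> last s = last w) \<or> (t \<noteq> [] \<and> last t = last w)"
proof (induction w arbitrary: s t)
  case Nil
  then show ?case by simp
next
  case (Cons c w)
  show ?case
  proof (cases "(case s of [] \<Rightarrow> 0 | a # s' \<Rightarrow> if a = c then shw s' t w else 0) \<noteq> 0")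
    case True
    then obtain s' where s: "s = c # s'" "shw s' t w \<noteq> 0" by (auto split: list.splits if_splits)
    show ?thesis
    proof (cases "w = []")
      case True with s show ?thesis by (auto split: if_splits)
    next
      case False
      from Cons.IH[OF s(2) False] s False show ?thesis by auto
    qed
  next
    case False
    with Cons.prems have "(case t of [] \<Rightarrow> 0 | b # t' \<Rightarrow> if b = c then shw s t' w else 0) \<noteq> 0"
      by simp
    then obtain t' where s: "t = c # t'" "shw s t' w \<noteq> 0" by (auto split: list.splits if_splits)
    show ?thesis
    proof (cases "w = []")
      case True with s show ?thesis by (auto split: if_splits)
    next
      case False
      from Cons.IH[OF s(2) False] s False show ?thesis by auto
    qed
  qed
qed

lemma shw_map: "inj h \<Longrightarrow> shw (map h s) (map h t) (map h w) = shw s t w"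
proof (induction w arbitrary: s t)
  case Nil
  then show ?case by simp
next
  case (Cons c w)
  have e: "\<And>a. (h a = h c) = (a = c)" using Cons.prems by (auto dest: injD)
  have IH: "\<And>s t. shw (map h s) (map h t) (map h w) = shw s t w" using Cons by blast
  have IH2: "\<And>s a t. shw (map h s) (h a # map h t) (map h w) = shw s (a#t) w"
    using IH by (metis list.map(2))
  have IH3: "\<And>s a t. shw (h a # map h s) (map h t) (map h w) = shw (a#s) t w"
    using IH by (metis list.map(2))
  show ?case
    by (cases s; cases t) (auto simp: e IH IH2 IH3 IH[of "[]", simplified] IH[of _ "[]", simplified])
qed

lemma S0word_shw: "shw u v w \<noteq> 0 \<Longrightarrow> S0word u \<Longrightarrow> S0word v \<Longrightarrow> S0word w"
  using shw_last[of u v w] by (auto simp: S0word_def)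

section \<open>The shuffle product on linear combinations\<close>

lemma shuffle_eq_sum_superset:
  assumes "finite S" "supp x \<subseteq> S" "finite T" "supp y \<subseteq> T"
  shows "shuffle x y w = (\<Sum>(u,v)\<in>S\<times>T. x u * y v * shw u v w)"
  unfolding shuffle_def
proof (rule sum.mono_neutral_left)
  show "finite (S \<times> T)" using assms by auto
  show "supp x \<times> supp y \<subseteq> S \<times> T" using assms by auto
  show "\<forall>i\<in>S \<times> T - supp x \<times> supp y. (case i of (u, v) \<Rightarrow> x u * y v * shw u v w) = 0"
    by (auto simp: supp_def)
qed

lemma shuffle_comm: "shuffle x y = shuffle y x"
proof
  fix w
  have "shuffle x y w = (\<Sum>u\<in>supp x. \<Sum>v\<in>supp y. x u * y v * shw u v w)"
    unfolding shuffle_def by (simp add: sum.cartesian_product)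
  also have "\<dots> = (\<Sum>v\<in>supp y. \<Sum>u\<in>supp x. y v * x u * shw v u w)"
    by (subst sum.swap) (simp add: shw_comm mult_ac)
  also have "\<dots> = shuffle y x w"
    unfolding shuffle_def by (simp add: sum.cartesian_product)
  finally show "shuffle x y w = shuffle y x w" .
qed

lemma shuffle_sum_left:
  assumes I: "finite I" and fi: "\<And>i. i \<in> I \<Longrightarrow> finite (supp (f i))" and fy: "finite (supp y)"
  shows "shuffle (\<lambda>w. \<Sum>i\<in>I. k i * f i w) y v = (\<Sum>i\<in>I. k i * shuffle (f i) y v)"
proof -
  define S where "S = (\<Union>i\<in>I. supp (f i))"
  have fS: "finite S" using I fi by (auto simp: S_def)
  have s1: "supp (\<lambda>w. \<Sum>i\<in>I. k i * f i w) \<subseteq> S"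
  proof
    fix w assume "w \<in> supp (\<lambda>w. \<Sum>i\<in>I. k i * f i w)"
    then have "(\<Sum>i\<in>I. k i * f i w) \<noteq> 0" by (simp add: supp_def)
    then obtain i where "i \<in> I" "k i * f i w \<noteq> 0" by (meson sum.neutral)
    then show "w \<in> S" by (auto simp: S_def supp_def)
  qed
  have "shuffle (\<lambda>w. \<Sum>i\<in>I. k i * f i w) y v =
      (\<Sum>(u,t)\<in>S\<times>supp y. (\<Sum>i\<in>I. k i * f i u) * y t * shw u t v)"
    by (rule shuffle_eq_sum_superset[OF fS s1 fy]) simp
  also have "\<dots> = (\<Sum>(u,t)\<in>S\<times>supp y. \<Sum>i\<in>I. k i * (f i u * y t * shw u t v))"
    by (rule sum.cong[OF refl]) (auto simp: sum_distrib_right sum_distrib_left mult_ac)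
  also have "\<dots> = (\<Sum>i\<in>I. k i * (\<Sum>(u,t)\<in>S\<times>supp y. f i u * y t * shw u t v))"
    by (simp only: sum_distrib_left split_def) (rule sum.swap)
  also have "\<dots> = (\<Sum>i\<in>I. k i * shuffle (f i) y v)"
  proof (rule sum.cong[OF refl])
    fix i assume "i \<in> I"
    then have "supp (f i) \<subseteq> S" by (auto simp: S_def)
    then show "k i * (\<Sum>(u,t)\<in>S\<times>supp y. f i u * y t * shw u t v) = k i * shuffle (f i) y v"
      using shuffle_eq_sum_superset[OF fS _ fy, where x="f i" and w=v] by simp
  qed
  finally show ?thesis .
qed

lemma finite_supp_Cons: "finite (supp x) \<Longrightarrow> finite (supp (\<lambda>w. x (c # w)))"
proof -
  assume "finite (supp x)"
  then have "finite (Cons c -` supp x)" by (rule finite_vimageI) (simp add: inj_on_def)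
  moreover have "supp (\<lambda>w. x (c # w)) = Cons c -` supp x" by (auto simp: supp_def)
  ultimately show ?thesis by simp
qed

lemma shuffle_Cons_left_part:
  assumes fx: "finite (supp x)" and fy: "finite (supp y)"
  shows "(\<Sum>(u,v)\<in>supp x \<times> supp y. x u * y v *
            (case u of [] \<Rightarrow> 0 | a # u' \<Rightarrow> if a = c then shw u' v w else 0))
         = shuffle (\<lambda>w. x (c # w)) y w"
proof -
  define P where "P = {(u,v). (u,v) \<in> supp x \<times> supp y \<and> (\<exists>u'. u = c # u')}"
  have "(\<Sum>(u,v)\<in>supp x \<times> supp y. x u * y v *
            (case u of [] \<Rightarrow> 0 | a # u' \<Rightarrow> if a = c then shw u' v w else 0))
      = (\<Sum>(u,v)\<in>P. x u * y v *
            (case u of [] \<Rightarrow> 0 | a # u' \<Rightarrow> if a = c then shw u' v w else 0))"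
    by (rule sum.mono_neutral_right) (use fx fy in \<open>auto simp: P_def split: list.splits if_splits\<close>)
  also have "\<dots> = (\<Sum>(u,v)\<in>P. x u * y v * shw (tl u) v w)"
    by (rule sum.cong) (auto simp: P_def)
  also have "P = (\<lambda>(u',v). (c # u', v)) ` (supp (\<lambda>w. x (c # w)) \<times> supp y)"
    by (auto simp: P_def supp_def image_iff)
  also have "(\<Sum>(u,v)\<in>(\<lambda>(u',v). (c # u', v)) ` (supp (\<lambda>w. x (c # w)) \<times> supp y). x u * y v * shw (tl u) v w)
      = (\<Sum>(u',v)\<in>supp (\<lambda>w. x (c # w)) \<times> supp y. x (c # u') * y v * shw u' v w)"
    by (subst sum.reindex) (auto simp: inj_on_def case_prod_beta)
  also have "\<dots> = shuffle (\<lambda>w. x (c # w)) y w" by (simp add: shuffle_def)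
  finally show ?thesis .
qed

lemma shuffle_Cons:
  assumes fx: "finite (supp x)" and fy: "finite (supp y)"
  shows "shuffle x y (c # w) = shuffle (\<lambda>w. x (c # w)) y w + shuffle x (\<lambda>w. y (c # w)) w"
proof -
  have "shuffle x y (c # w) = (\<Sum>(u,v)\<in>supp x \<times> supp y. x u * y v *
            (case u of [] \<Rightarrow> 0 | a # u' \<Rightarrow> if a = c then shw u' v w else 0))
       + (\<Sum>(u,v)\<in>supp x \<times> supp y. x u * y v *
            (case v of [] \<Rightarrow> 0 | b # v' \<Rightarrow> if b = c then shw u v' w else 0))"
    unfolding shuffle_def by (simp add: sum.distrib[symmetric] distrib_left case_prod_beta)
  also have "(\<Sum>(u,v)\<in>supp x \<times> supp y. x u * y v *
            (case v of [] \<Rightarrow> 0 | b # v' \<Rightarrow> if b = c then shw u v' w else 0))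
      = (\<Sum>(v,u)\<in>supp y \<times> supp x. y v * x u *
            (case v of [] \<Rightarrow> 0 | b # v' \<Rightarrow> if b = c then shw v' u w else 0))"
    by (simp add: sum.cartesian_product[symmetric])
       (subst sum.swap, rule sum.cong[OF refl], rule sum.cong[OF refl], simp add: shw_comm mult_ac split: list.split)
  also have "\<dots> = shuffle (\<lambda>w. y (c # w)) x w"
    by (rule shuffle_Cons_left_part[OF fy fx])
  also have "(\<Sum>(u,v)\<in>supp x \<times> supp y. x u * y v *
            (case u of [] \<Rightarrow> 0 | a # u' \<Rightarrow> if a = c then shw u' v w else 0))
       = shuffle (\<lambda>w. x (c # w)) y w"
    by (rule shuffle_Cons_left_part[OF fx fy])
  finally show ?thesis by (simp add: shuffle_comm)
qed

lemma shuffle_zero_left: "shuffle (\<lambda>w. 0) y = (\<lambda>w. 0)"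
  by (auto simp: shuffle_def supp_def)

lemma shuffle_Cons_Cons:
  assumes fx: "finite (supp x)" and fy: "finite (supp y)"
  shows "shuffle x y (a # b # v) =
      shuffle (\<lambda>w. x (a # b # w)) y v + shuffle (\<lambda>w. x (a # w)) (\<lambda>w. y (b # w)) v
    + shuffle (\<lambda>w. x (b # w)) (\<lambda>w. y (a # w)) v + shuffle (\<lambda>w. y (a # b # w)) x v"
proof -
  have fdx: "finite (supp (\<lambda>w. x (a # w)))" and fdy: "finite (supp (\<lambda>w. y (a # w)))"
    using finite_supp_Cons[OF fx] finite_supp_Cons[OF fy] .
  have "shuffle x (\<lambda>w. y (a # w)) (b # v) = shuffle (\<lambda>w. y (a # w)) x (b # v)"
    by (simp only: shuffle_comm[of x])
  also have "\<dots> = shuffle (\<lambda>w. y (a # b # w)) x v + shuffle (\<lambda>w. y (a # w)) (\<lambda>w. x (b # w)) v"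
    by (rule shuffle_Cons[OF fdy fx])
  also have "shuffle (\<lambda>w. y (a # w)) (\<lambda>w. x (b # w)) = shuffle (\<lambda>w. x (b # w)) (\<lambda>w. y (a # w))"
    by (rule shuffle_comm)
  finally show ?thesis
    by (simp add: shuffle_Cons[OF fx fy] shuffle_Cons[OF fdx fy])
qed

lemma supp_shuffle_shw:
  assumes "w \<in> supp (shuffle x y)"
  shows "\<exists>u\<in>supp x. \<exists>v\<in>supp y. shw u v w \<noteq> 0"
proof (rule ccontr)
  assume "\<not> ?thesis"
  then have "shuffle x y w = 0" unfolding shuffle_def by (intro sum.neutral) auto
  with assms show False by (simp add: supp_def)
qed

lemma shuffle_in_S_space:
  assumes x: "x \<in> S_space A" and y: "y \<in> S_space A"
  shows "shuffle x y \<in> S_space A"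
proof -
  have fx: "finite (supp x)" and fy: "finite (supp y)" using x y by (auto simp: S_space_def)
  have sub: "supp (shuffle x y) \<subseteq>
      (\<Union>(u,v)\<in>supp x \<times> supp y. {w. set w \<subseteq> set u \<union> set v \<and> length w \<le> length u + length v})"
  proof
    fix w assume "w \<in> supp (shuffle x y)"
    then obtain u v where uv: "u \<in> supp x" "v \<in> supp y" "shw u v w \<noteq> 0"
      using supp_shuffle_shw by blast
    then show "w \<in> (\<Union>(u,v)\<in>supp x \<times> supp y.
        {w. set w \<subseteq> set u \<union> set v \<and> length w \<le> length u + length v})"
      using shw_length[OF uv(3)] shw_set[OF uv(3)] by (intro UN_I[of "(u,v)"]) auto
  qed
  have "finite (supp (shuffle x y))"
    by (rule finite_subset[OF sub], rule finite_UN_I)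
      (use fx fy in \<open>auto simp: finite_lists_length_le\<close>)
  moreover have "supp (shuffle x y) \<subseteq> lists A"
  proof
    fix w assume "w \<in> supp (shuffle x y)"
    then obtain u v where "u \<in> supp x" "v \<in> supp y" "shw u v w \<noteq> 0"
      using supp_shuffle_shw by blast
    then show "w \<in> lists A"
      using x y shw_set[of u v w] by (auto simp: S_space_def lists_eq_set)
  qed
  ultimately show ?thesis by (simp add: S_space_def)
qed

section \<open>Chen's condition is preserved by shuffles\<close>

definition chen_cond :: "letter set \<Rightarrow> (letter \<Rightarrow> letter \<Rightarrow> complex) \<Rightarrow> lin \<Rightarrow> bool" where
  "chen_cond L K x \<longleftrightarrow> (\<forall>u v. (\<Sum>a\<in>L. \<Sum>b\<in>L. x (u @ [a, b] @ v) * K a b) = 0)"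

lemma chen_cond_Cons:
  assumes "chen_cond L K x"
  shows "chen_cond L K (\<lambda>w. x (c # w))"
  unfolding chen_cond_def
proof (intro allI)
  fix u v
  show "(\<Sum>a\<in>L. \<Sum>b\<in>L. x (c # u @ [a, b] @ v) * K a b) = 0"
    using assms[unfolded chen_cond_def, rule_format, of "c # u" v] by simp
qed

lemma chen_cond_shuffle_head:
  assumes L: "finite L" and x: "chen_cond L K x"
    and fx: "finite (supp x)" and fy: "finite (supp y)"
  shows "(\<Sum>a\<in>L. \<Sum>b\<in>L. shuffle (\<lambda>w. x (a # b # w)) y v * K a b) = 0"
proof -
  have fddx: "finite (supp (\<lambda>w. x (a # b # w)))" for a b
    using finite_supp_Cons[OF finite_supp_Cons[OF fx]] .
  have x0: "(\<lambda>w. \<Sum>p\<in>L\<times>L. K (fst p) (snd p) * x (fst p # snd p # w)) = (\<lambda>w. 0)"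
  proof
    fix w
    have "(\<Sum>p\<in>L\<times>L. K (fst p) (snd p) * x (fst p # snd p # w))
        = (\<Sum>a\<in>L. \<Sum>b\<in>L. x ([] @ [a, b] @ w) * K a b)"
      by (simp add: sum.cartesian_product case_prod_beta mult_ac)
    then show "(\<Sum>p\<in>L\<times>L. K (fst p) (snd p) * x (fst p # snd p # w)) = 0"
      using x by (simp only: chen_cond_def)
  qed
  have "(\<Sum>a\<in>L. \<Sum>b\<in>L. shuffle (\<lambda>w. x (a # b # w)) y v * K a b)
      = (\<Sum>p\<in>L\<times>L. K (fst p) (snd p) * shuffle (\<lambda>w. x (fst p # snd p # w)) y v)"
    by (simp add: sum.cartesian_product case_prod_beta mult_ac)
  also have "\<dots> = shuffle (\<lambda>w. \<Sum>p\<in>L\<times>L. K (fst p) (snd p) * x (fst p # snd p # w)) y v"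
    by (rule shuffle_sum_left[symmetric]) (use L fddx fy in auto)
  also have "\<dots> = shuffle (\<lambda>w. 0) y v"
    by (simp only: x0)
  finally show ?thesis by (simp add: shuffle_zero_left)
qed

lemma sum_antisym_kernel:
  fixes T K :: "'a \<Rightarrow> 'a \<Rightarrow> complex"
  assumes K: "\<And>a b. K a b = - K b a"
  shows "(\<Sum>a\<in>L. \<Sum>b\<in>L. (T a b + T b a) * K a b) = 0"
proof -
  have "(\<Sum>a\<in>L. \<Sum>b\<in>L. T b a * K a b) = (\<Sum>b\<in>L. \<Sum>a\<in>L. T b a * K a b)"
    by (rule sum.swap)
  also have "\<dots> = (\<Sum>a\<in>L. \<Sum>b\<in>L. - (T a b * K a b))"
    by (intro sum.cong refl) (metis K mult_minus_right)
  also have "\<dots> = - (\<Sum>a\<in>L. \<Sum>b\<in>L. T a b * K a b)"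
    by (simp add: sum_negf)
  finally show ?thesis by (simp add: distrib_right sum.distrib)
qed

text \<open>Each letter of the prefix \<open>u\<close> comes from \<open>x\<close> or from \<open>y\<close>, which reduces to \<open>u = []\<close>.
  There the shuffle splits into four terms: the outer two vanish by the condition on \<open>x\<close> and
  on \<open>y\<close>, the cross terms cancel by antisymmetry of the kernel.\<close>

lemma chen_cond_shuffle_at:
  assumes L: "finite L" and K: "\<And>a b. K a b = - K b a"
  shows "finite (supp x) \<Longrightarrow> finite (supp y) \<Longrightarrow> chen_cond L K x \<Longrightarrow> chen_cond L K y \<Longrightarrow>
     (\<Sum>a\<in>L. \<Sum>b\<in>L. shuffle x y (u @ [a, b] @ v) * K a b) = 0"
proof (induction u arbitrary: x y)
  case Nil
  note fx = Nil.prems(1) and fy = Nil.prems(2)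
  define T where "T a b = shuffle (\<lambda>w. x (a # w)) (\<lambda>w. y (b # w)) v" for a b
  have "shuffle x y ([] @ [a, b] @ v) * K a b
     = shuffle (\<lambda>w. x (a # b # w)) y v * K a b + (T a b + T b a) * K a b
       + shuffle (\<lambda>w. y (a # b # w)) x v * K a b" for a b
    by (simp add: shuffle_Cons_Cons[OF fx fy] T_def algebra_simps)
  then have "(\<Sum>a\<in>L. \<Sum>b\<in>L. shuffle x y ([] @ [a, b] @ v) * K a b)
     = (\<Sum>a\<in>L. \<Sum>b\<in>L. shuffle (\<lambda>w. x (a # b # w)) y v * K a b)
     + (\<Sum>a\<in>L. \<Sum>b\<in>L. (T a b + T b a) * K a b)
     + (\<Sum>a\<in>L. \<Sum>b\<in>L. shuffle (\<lambda>w. y (a # b # w)) x v * K a b)"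
    by (simp only: sum.distrib)
  then show ?case
    using chen_cond_shuffle_head[OF L Nil.prems(3) fx fy] chen_cond_shuffle_head[OF L Nil.prems(4) fy fx]
      sum_antisym_kernel[OF K, where T = T and L = L] by simp
next
  case (Cons c u)
  note fx = Cons.prems(1) and fy = Cons.prems(2)
  have "(\<Sum>a\<in>L. \<Sum>b\<in>L. shuffle x y ((c # u) @ [a, b] @ v) * K a b)
      = (\<Sum>a\<in>L. \<Sum>b\<in>L. shuffle (\<lambda>w. x (c # w)) y (u @ [a, b] @ v) * K a b)
      + (\<Sum>a\<in>L. \<Sum>b\<in>L. shuffle x (\<lambda>w. y (c # w)) (u @ [a, b] @ v) * K a b)"
    by (simp add: shuffle_Cons[OF fx fy] distrib_right sum.distrib)
  also have "\<dots> = 0"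
    using Cons.IH[OF finite_supp_Cons[OF fx] fy chen_cond_Cons[OF Cons.prems(3)] Cons.prems(4)]
      Cons.IH[OF fx finite_supp_Cons[OF fy] Cons.prems(3) chen_cond_Cons[OF Cons.prems(4)]]
    by simp
  finally show ?case .
qed

lemma chen_cond_shuffle:
  assumes "finite L" "\<And>a b. K a b = - K b a" "finite (supp x)" "finite (supp y)"
    "chen_cond L K x" "chen_cond L K y"
  shows "chen_cond L K (shuffle x y)"
  unfolding chen_cond_def by (intro allI chen_cond_shuffle_at[OF assms(1,2) assms(3-6)])

lemma wedge_antisym: "wedge a b z = - wedge b a z"
  unfolding wedge_def by (simp add: algebra_simps)

lemma finite_Aset: "finite Aset" by (simp add: Aset_def)

lemma B_space_iff_chen_cond: "x \<in> B_space \<longleftrightarrow> x \<in> S_space Aset \<and> (\<forall>z\<in>Dom. chen_cond Aset (\<lambda>a b. wedge a b z) x)"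
proof -
  have "(\<forall>n. chen n (hcomp n x)) \<longleftrightarrow> (\<forall>z\<in>Dom. chen_cond Aset (\<lambda>a b. wedge a b z) x)"
  proof
    assume H: "\<forall>n. chen n (hcomp n x)"
    show "\<forall>z\<in>Dom. chen_cond Aset (\<lambda>a b. wedge a b z) x"
      unfolding chen_cond_def
    proof (intro ballI allI)
      fix z and u v :: "letter list" assume z: "z \<in> Dom"
      define n where "n = length u + length v + 2"
      have c: "chen n (hcomp n x)" using H by blast
      have "(\<Sum>a\<in>Aset. \<Sum>b\<in>Aset. hcomp n x (u @ [a, b] @ v) * wedge a b z) = 0"
        using c z unfolding chen_def
        by (elim allE[of _ "Suc (length u)"] allE[of _ u] allE[of _ v]) (auto simp: n_def)
      moreover have "hcomp n x (u @ [a, b] @ v) = x (u @ [a, b] @ v)" for a b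
        by (simp add: hcomp_def n_def)
      ultimately show "(\<Sum>a\<in>Aset. \<Sum>b\<in>Aset. x (u @ [a, b] @ v) * wedge a b z) = 0" by simp
    qed
  next
    assume H: "\<forall>z\<in>Dom. chen_cond Aset (\<lambda>a b. wedge a b z) x"
    show "\<forall>n. chen n (hcomp n x)"
      unfolding chen_def
    proof (intro allI impI ballI)
      fix n l :: nat and u v :: "letter list" and z
      assume l: "1 \<le> l \<and> l < n" and uv: "length u = l - 1 \<and> length v = n - l - 1" and z: "z \<in> Dom"
      have len: "length u + length v + 2 = n" using l uv by arith
      have "hcomp n x (u @ [a, b] @ v) = x (u @ [a, b] @ v)" for a b
        using len by (simp add: hcomp_def)
      then show "(\<Sum>a\<in>Aset. \<Sum>b\<in>Aset. hcomp n x (u @ [a, b] @ v) * wedge a b z) = 0"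
        using H z unfolding chen_cond_def by simp
    qed
  qed
  then show ?thesis by (simp add: B_space_def)
qed

lemma shuffle_in_B0_space:
  assumes x: "x \<in> B0_space" and y: "y \<in> B0_space"
  shows "shuffle x y \<in> B0_space"
proof -
  have xS: "x \<in> S_space Aset" and yS: "y \<in> S_space Aset"
    and xK: "\<forall>z\<in>Dom. chen_cond Aset (\<lambda>a b. wedge a b z) x"
    and yK: "\<forall>z\<in>Dom. chen_cond Aset (\<lambda>a b. wedge a b z) y"
    using x y by (auto simp: B0_space_def B_space_iff_chen_cond)
  have "chen_cond Aset (\<lambda>a b. wedge a b z) (shuffle x y)" if "z \<in> Dom" for z
    using chen_cond_shuffle[OF finite_Aset wedge_antisym] xS yS xK yK that
    by (auto simp: S_space_def)
  moreover have "S0word w" if w: "w \<in> supp (shuffle x y)" for w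
  proof -
    obtain u v where "u \<in> supp x" "v \<in> supp y" "shw u v w \<noteq> 0"
      using supp_shuffle_shw[OF w] by blast
    then show ?thesis using x y S0word_shw by (auto simp: B0_space_def)
  qed
  ultimately show ?thesis
    using shuffle_in_S_space[OF xS yS] by (auto simp: B0_space_def B_space_iff_chen_cond)
qed

lemma unit_S_in_B0_space: "unit_S \<in> B0_space"
proof -
  have s: "supp unit_S = {[]}" by (auto simp: supp_def unit_S_def delta_def)
  have "chen_cond Aset (\<lambda>a b. wedge a b z) unit_S" for z
    by (simp add: chen_cond_def unit_S_def delta_def)
  moreover have "unit_S \<in> S_space Aset" using s by (simp add: S_space_def)
  ultimately have "unit_S \<in> B_space" unfolding B_space_iff_chen_cond by blast
  then show ?thesis using s unfolding B0_space_def by (simp add: S0word_def)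
qed

lemma B0_space_B_space: "x \<in> B0_space \<Longrightarrow> x \<in> B_space" by (simp add: B0_space_def)

lemma B0_space_finite_supp: "x \<in> B0_space \<Longrightarrow> finite (supp x)"
  by (simp add: B0_space_def B_space_iff_chen_cond S_space_def)

lemma B0_space_outside: "x \<in> B0_space \<Longrightarrow> w \<notin> lists Aset \<Longrightarrow> x w = 0"
  unfolding B0_space_def B_space_iff_chen_cond S_space_def supp_def by blast

lemma B0_space_S0word: "x \<in> B0_space \<Longrightarrow> \<not> S0word w \<Longrightarrow> x w = 0"
  unfolding B0_space_def supp_def by blast

section \<open>Sorted words\<close>

lemma sorted_split_unique:
  assumes "F \<inter> B = {}" "s1 \<in> lists F" "s2 \<in> lists F" "q1 \<in> lists B" "q2 \<in> lists B"
    "s1 @ q1 = s2 @ q2"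
  shows "s1 = s2 \<and> q1 = q2"
  using assms
proof (induction s1 arbitrary: s2)
  case Nil
  show ?case
  proof (cases s2)
    case Nil then show ?thesis using Nil.prems by simp
  next
    case (Cons a s2')
    then have "a \<in> F" "a \<in> set q1" using Nil.prems by auto
    then show ?thesis using Nil.prems by auto
  qed
next
  case (Cons a s1)
  show ?case
  proof (cases s2)
    case Nil
    then have "a \<in> F" "a \<in> set q2" using Cons.prems by auto
    then show ?thesis using Cons.prems by auto
  next
    case (Cons b s2')
    then show ?thesis using Cons.IH[of s2'] Cons.prems by auto
  qed
qed

definition fb_sorted :: "letter set \<Rightarrow> letter set \<Rightarrow> letter list \<Rightarrow> bool" where
  "fb_sorted F B u \<longleftrightarrow> (\<exists>s q. u = s @ q \<and> s \<in> lists F \<and> q \<in> lists B)"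

lemma shw_fb_sorted:
  assumes "q \<in> lists B"
  shows "s \<in> lists F \<Longrightarrow> shw u v (s @ q) \<noteq> 0 \<Longrightarrow> fb_sorted F B u"
proof (induction s arbitrary: u v)
  case Nil
  then have "set u \<subseteq> B" using assms shw_set[OF Nil.prems(2)] by auto
  then have "u = [] @ u \<and> [] \<in> lists F \<and> u \<in> lists B" by auto
  then show ?case unfolding fb_sorted_def by blast
next
  case (Cons c s)
  have c: "c \<in> F" and s: "s \<in> lists F" using Cons.prems by auto
  have ne: "(case u of [] \<Rightarrow> 0 | a # u' \<Rightarrow> if a = c then shw u' v (s @ q) else 0) +
       (case v of [] \<Rightarrow> 0 | b # v' \<Rightarrow> if b = c then shw u v' (s @ q) else 0) \<noteq> 0"
    using Cons.prems(2) by simp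
  show ?case
  proof (cases "(case u of [] \<Rightarrow> 0 | a # u' \<Rightarrow> if a = c then shw u' v (s @ q) else 0) \<noteq> 0")
    case True
    then obtain u' where u: "u = c # u'" "shw u' v (s @ q) \<noteq> 0" by (auto split: list.splits if_splits)
    from Cons.IH[OF s u(2)] obtain s1 q1 where "u' = s1 @ q1" "s1 \<in> lists F" "q1 \<in> lists B"
      unfolding fb_sorted_def by blast
    then have "u = (c # s1) @ q1 \<and> c # s1 \<in> lists F \<and> q1 \<in> lists B" using u c by simp
    then show ?thesis unfolding fb_sorted_def by blast
  next
    case False
    with ne have "(case v of [] \<Rightarrow> 0 | b # v' \<Rightarrow> if b = c then shw u v' (s @ q) else 0) \<noteq> 0" by simp
    then obtain v' where "v = c # v'" "shw u v' (s @ q) \<noteq> 0" by (auto split: list.splits if_splits)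
    then show ?thesis using Cons.IH[OF s] by blast
  qed
qed

lemma shuffle_at_fb_sorted:
  assumes fx: "finite (supp x)" and fy: "finite (supp y)" and s: "s \<in> lists F" and q: "q \<in> lists B"
  shows "shuffle x y (s @ q) = (\<Sum>(u, v)\<in>{u \<in> supp x. fb_sorted F B u} \<times> {v \<in> supp y. fb_sorted F B v}.
      x u * y v * shw u v (s @ q))"
  unfolding shuffle_def
proof (rule sum.mono_neutral_right)
  show "finite (supp x \<times> supp y)" using fx fy by simp
  show "{u \<in> supp x. fb_sorted F B u} \<times> {v \<in> supp y. fb_sorted F B v} \<subseteq> supp x \<times> supp y"
    by auto
  have "fb_sorted F B u \<and> fb_sorted F B v" if "shw u v (s @ q) \<noteq> 0" for u v
    using shw_fb_sorted[OF q s that] shw_fb_sorted[OF q s, of v u] that shw_comm by metis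
  then show "\<forall>uv\<in>supp x \<times> supp y - {u \<in> supp x. fb_sorted F B u} \<times> {v \<in> supp y. fb_sorted F B v}.
      (case uv of (u, v) \<Rightarrow> x u * y v * shw u v (s @ q)) = 0"
    by fastforce
qed

lemma case_fb_sorted_append:
  assumes "F \<inter> B = {}" "s1 \<in> lists F" "q1 \<in> lists B" "c \<in> F"
  shows "(case s1 @ q1 of [] \<Rightarrow> 0 | a # r \<Rightarrow> if a = c then X r else (0::complex)) =
         (case s1 of [] \<Rightarrow> 0 | a # s1' \<Rightarrow> if a = c then X (s1' @ q1) else 0)"
  using assms by (cases s1; cases q1) auto

lemma shw_fb_sorted_split:
  assumes FB: "F \<inter> B = {}" and q: "q \<in> lists B" "q1 \<in> lists B" "q2 \<in> lists B"
  shows "s \<in> lists F \<Longrightarrow> s1 \<in> lists F \<Longrightarrow> s2 \<in> lists F \<Longrightarrow>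
     shw (s1 @ q1) (s2 @ q2) (s @ q) = shw s1 s2 s * shw q1 q2 q"
proof (induction s arbitrary: s1 s2)
  case Nil
  have "s1 = [] \<and> s2 = []" if "shw (s1 @ q1) (s2 @ q2) q \<noteq> 0"
  proof -
    have "set s1 \<subseteq> F \<inter> B" "set s2 \<subseteq> F \<inter> B"
      using shw_set[OF that] q(1) Nil.prems by auto
    then show ?thesis using FB by simp
  qed
  then show ?case by (cases "s1 = [] \<and> s2 = []") auto
next
  case (Cons c s)
  have c: "c \<in> F" and s: "s \<in> lists F" using Cons.prems by auto
  have e1: "(case s1 @ q1 of [] \<Rightarrow> 0 | a # r \<Rightarrow> if a = c then shw r (s2 @ q2) (s @ q) else 0) =
         (case s1 of [] \<Rightarrow> 0 | a # s1' \<Rightarrow> if a = c then shw (s1' @ q1) (s2 @ q2) (s @ q) else 0)"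
    by (rule case_fb_sorted_append[OF FB Cons.prems(2) q(2) c])
  have e2: "(case s2 @ q2 of [] \<Rightarrow> 0 | b # r \<Rightarrow> if b = c then shw (s1 @ q1) r (s @ q) else 0) =
         (case s2 of [] \<Rightarrow> 0 | b # s2' \<Rightarrow> if b = c then shw (s1 @ q1) (s2' @ q2) (s @ q) else 0)"
    by (rule case_fb_sorted_append[OF FB Cons.prems(3) q(3) c])
  have "shw (s1 @ q1) (s2 @ q2) ((c # s) @ q) =
      (case s1 of [] \<Rightarrow> 0 | a # s1' \<Rightarrow> if a = c then shw (s1' @ q1) (s2 @ q2) (s @ q) else 0) +
      (case s2 of [] \<Rightarrow> 0 | b # s2' \<Rightarrow> if b = c then shw (s1 @ q1) (s2' @ q2) (s @ q) else 0)"
    using e1 e2 by simp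
  also have "\<dots> = shw s1 s2 (c # s) * shw q1 q2 q"
  proof -
    have IH: "\<And>a b. a \<in> lists F \<Longrightarrow> b \<in> lists F \<Longrightarrow> shw (a @ q1) (b @ q2) (s @ q) = shw a b s * shw q1 q2 q"
      using Cons.IH[OF s] by blast
    have IH0: "\<And>b. b \<in> lists F \<Longrightarrow> shw q1 (b @ q2) (s @ q) = shw [] b s * shw q1 q2 q"
      using IH[of "[]"] by simp
    have IH0': "\<And>a. a \<in> lists F \<Longrightarrow> shw (a @ q1) q2 (s @ q) = shw a [] s * shw q1 q2 q"
      using IH[of _ "[]"] by simp
    have IH1: "\<And>a b l. a \<in> lists F \<Longrightarrow> b \<in> F \<Longrightarrow> l \<in> lists F \<Longrightarrow>
        shw (a @ q1) (b # l @ q2) (s @ q) = shw a (b # l) s * shw q1 q2 q"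
      using IH[of _ "_ # _"] by simp
    have IH2: "\<And>a b l. a \<in> lists F \<Longrightarrow> b \<in> F \<Longrightarrow> l \<in> lists F \<Longrightarrow>
        shw (b # l @ q1) (a @ q2) (s @ q) = shw (b # l) a s * shw q1 q2 q"
      using IH[of "_ # _"] by simp
    show ?thesis
      using Cons.prems by (cases s1; cases s2) (auto simp: distrib_right IH IH0 IH0' IH1 IH2)
  qed
  finally show ?case by simp
qed

lemma mapw_char:
  assumes fk: "\<And>a b. f a = Some b \<longleftrightarrow> b \<in> A \<and> a = k b"
  shows "mapw f u = Some p \<longleftrightarrow> p \<in> lists A \<and> u = map k p"
proof (induction u arbitrary: p)
  case Nil
  then show ?case by auto
next
  case (Cons a u)
  show ?case
  proof
    assume H: "mapw f (a # u) = Some p"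
    then obtain b w' where "f a = Some b" "mapw f u = Some w'" "p = b # w'"
      by (auto split: option.splits)
    then show "p \<in> lists A \<and> a # u = map k p" using Cons.IH fk by auto
  next
    assume H: "p \<in> lists A \<and> a # u = map k p"
    then obtain b w' where p: "p = b # w'" "a = k b" "u = map k w'" "b \<in> A" "w' \<in> lists A"
      by (cases p) auto
    then have "f a = Some b" "mapw f u = Some w'" using fk Cons.IH by auto
    then show "mapw f (a # u) = Some p" using p by simp
  qed
qed

section \<open>The abstract fibration setting\<close>

text \<open>The letters split into fibre letters \<open>Fib\<close> and base letters \<open>Base\<close>: fibre-fibre wedges
  are combinations (coefficients \<open>D\<close>) of the base-fibre wedges, which are linearly
  independent, and base-base wedges vanish. The restricted fibre alphabet \<open>A1\<close> is matched
  with \<open>Fib\<close> by the involution \<open>h\<close>; \<open>kF\<close>, \<open>kB\<close> are \<open>\<zeta>\<^sub>1\<close>, \<open>\<zeta>\<^sub>2\<close> in the order fibre, base.\<close>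

locale fibration =
  fixes Fib Base :: "letter set" and kF kB :: letter
    and D :: "letter \<Rightarrow> letter \<Rightarrow> letter \<Rightarrow> letter \<Rightarrow> complex"
    and A1 :: "letter set" and h :: "letter \<Rightarrow> letter"
    and f g :: "letter \<Rightarrow> letter option"
  assumes Aset_split: "Aset = Fib \<union> Base" and Fib_Base_disjoint: "Fib \<inter> Base = {}"
    and kF: "kF \<in> Fib" and kB: "kB \<in> Base" and kF_kB: "{Z1, Z2} = {kF, kB}"
    and D_kF: "\<And>\<beta> c d. D \<beta> kF c d = 0"
    and wedge_Fib_Fib: "\<And>z c d. z \<in> Dom \<Longrightarrow> c \<in> Fib \<Longrightarrow> d \<in> Fib \<Longrightarrow>
        wedge c d z + (\<Sum>\<beta>\<in>Base. \<Sum>\<phi>\<in>Fib. D \<beta> \<phi> c d * wedge \<beta> \<phi> z) = 0"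
    and wedge_Base_Base: "\<And>a b z. a \<in> Base \<Longrightarrow> b \<in> Base \<Longrightarrow> wedge a b z = 0"
    and wedge_Base_Fib_indep: "\<And>r \<beta> \<phi>. (\<And>z. z \<in> Dom \<Longrightarrow> (\<Sum>\<beta>\<in>Base. \<Sum>\<phi>\<in>Fib. r \<beta> \<phi> * wedge \<beta> \<phi> z) = 0) \<Longrightarrow>
        \<beta> \<in> Base \<Longrightarrow> \<phi> \<in> Fib \<Longrightarrow> r \<beta> \<phi> = 0"
    and h_h: "\<And>a. h (h a) = a"
    and h_A1: "\<And>a. a \<in> A1 \<Longrightarrow> h a \<in> Fib" and h_Fib: "\<And>a. a \<in> Fib \<Longrightarrow> h a \<in> A1"
    and h_kF: "h kF = kF" and kB_notin_A1: "kB \<notin> A1" and finite_A1: "finite A1"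
    and mapw_f: "\<And>u p. mapw f u = Some p \<longleftrightarrow> p \<in> lists A1 \<and> u = map h p"
    and mapw_g: "\<And>v q. mapw g v = Some q \<longleftrightarrow> q \<in> lists Base \<and> v = q"
begin

lemma finite_Fib: "finite Fib"
  by (metis finite_Aset Aset_split finite_Un)

lemma finite_Base: "finite Base"
  by (metis finite_Aset Aset_split finite_Un)

lemma Fib_not_Base: "a \<in> Fib \<Longrightarrow> a \<notin> Base" using Fib_Base_disjoint by blast

lemma inj_h: "inj h"
  by (metis h_h injI)

lemma h_comp_h: "h \<circ> h = id"
  by (rule ext) (simp add: h_h)

lemma map_h_map_h: "map h (map h p) = p"
  by (simp add: h_comp_h)

lemma map_h_A1: "p \<in> lists A1 \<Longrightarrow> map h p \<in> lists Fib"
  using h_A1 by auto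

lemma map_h_Fib: "p \<in> lists Fib \<Longrightarrow> map h p \<in> lists A1"
  using h_Fib by auto

definition glue :: "letter list \<times> letter list \<Rightarrow> letter list" where
  "glue = (\<lambda>(p, q). map h p @ q)"

lemma glue_Pair [simp]: "glue (p, q) = map h p @ q"
  by (simp add: glue_def)

lemma inj_on_glue: "inj_on glue (lists A1 \<times> lists Base)"
proof (rule inj_onI)
  fix t1 t2
  assume t: "t1 \<in> lists A1 \<times> lists Base" "t2 \<in> lists A1 \<times> lists Base" and e: "glue t1 = glue t2"
  obtain p1 q1 p2 q2 where tt: "t1 = (p1, q1)" "t2 = (p2, q2)" by fastforce
  have "map h p1 \<in> lists Fib" "map h p2 \<in> lists Fib"
    using t map_h_A1 unfolding tt by auto
  then have "map h p1 = map h p2 \<and> q1 = q2"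
    using t e unfolding tt by (intro sorted_split_unique[OF Fib_Base_disjoint]) auto
  then show "t1 = t2" unfolding tt by (metis map_h_map_h)
qed

lemma iota_eq: "iota f g x (p, q) = (if p \<in> lists A1 \<and> q \<in> lists Base then x (map h p @ q) else 0)"
proof -
  have set: "{(u, v) \<in> supp (coprod x). mapw f u = Some p \<and> mapw g v = Some q}
      = (if p \<in> lists A1 \<and> q \<in> lists Base \<and> x (map h p @ q) \<noteq> 0 then {(map h p, q)} else {})"
    by (auto simp: mapw_f mapw_g supp_def coprod_def)
  show ?thesis
    unfolding iota_def proj_tensor_def by (simp only: set case_prod_conv) (auto simp: coprod_def)
qed

lemma chen_sum_expand:
  assumes z: "z \<in> Dom"
  shows "(\<Sum>a\<in>Aset. \<Sum>b\<in>Aset. G a b * wedge a b z) =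
    (\<Sum>\<beta>\<in>Base. \<Sum>\<phi>\<in>Fib. (G \<beta> \<phi> - G \<phi> \<beta> - (\<Sum>c\<in>Fib. \<Sum>d\<in>Fib. D \<beta> \<phi> c d * G c d)) * wedge \<beta> \<phi> z)"
proof -
  have split: "(\<Sum>a\<in>Aset. H a) = (\<Sum>a\<in>Fib. H a) + (\<Sum>a\<in>Base. H a)" for H :: "letter \<Rightarrow> complex"
    unfolding Aset_split by (rule sum.union_disjoint[OF finite_Fib finite_Base Fib_Base_disjoint])
  have "(\<Sum>a\<in>Aset. \<Sum>b\<in>Aset. G a b * wedge a b z) =
     (\<Sum>a\<in>Fib. \<Sum>b\<in>Fib. G a b * wedge a b z) + (\<Sum>a\<in>Fib. \<Sum>b\<in>Base. G a b * wedge a b z)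
     + (\<Sum>a\<in>Base. \<Sum>b\<in>Fib. G a b * wedge a b z) + (\<Sum>a\<in>Base. \<Sum>b\<in>Base. G a b * wedge a b z)"
    by (simp add: split sum.distrib)
  also have "(\<Sum>a\<in>Base. \<Sum>b\<in>Base. G a b * wedge a b z) = 0"
    by (intro sum.neutral ballI) (simp add: wedge_Base_Base)
  also have "(\<Sum>a\<in>Fib. \<Sum>b\<in>Base. G a b * wedge a b z) = (\<Sum>\<beta>\<in>Base. \<Sum>\<phi>\<in>Fib. - (G \<phi> \<beta> * wedge \<beta> \<phi> z))"
    by (subst sum.swap) (intro sum.cong refl, subst wedge_antisym, simp)
  also have "(\<Sum>a\<in>Fib. \<Sum>b\<in>Fib. G a b * wedge a b z)
      = (\<Sum>c\<in>Fib. \<Sum>d\<in>Fib. \<Sum>\<beta>\<in>Base. \<Sum>\<phi>\<in>Fib. - (D \<beta> \<phi> c d * G c d * wedge \<beta> \<phi> z))"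
  proof (intro sum.cong refl)
    fix c d assume c: "c \<in> Fib" and d: "d \<in> Fib"
    have "wedge c d z = - (\<Sum>\<beta>\<in>Base. \<Sum>\<phi>\<in>Fib. D \<beta> \<phi> c d * wedge \<beta> \<phi> z)"
      using wedge_Fib_Fib[OF z c d] by (simp add: eq_neg_iff_add_eq_0)
    then show "G c d * wedge c d z = (\<Sum>\<beta>\<in>Base. \<Sum>\<phi>\<in>Fib. - (D \<beta> \<phi> c d * G c d * wedge \<beta> \<phi> z))"
      by (simp add: sum_distrib_left sum_negf mult_ac)
  qed
  also have "\<dots> = (\<Sum>\<beta>\<in>Base. \<Sum>\<phi>\<in>Fib. \<Sum>c\<in>Fib. \<Sum>d\<in>Fib. - (D \<beta> \<phi> c d * G c d * wedge \<beta> \<phi> z))"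
  proof -
    let ?T = "\<lambda>c d \<beta> \<phi>. - (D \<beta> \<phi> c d * G c d * wedge \<beta> \<phi> z)"
    have "(\<Sum>c\<in>Fib. \<Sum>d\<in>Fib. \<Sum>\<beta>\<in>Base. \<Sum>\<phi>\<in>Fib. ?T c d \<beta> \<phi>)
        = (\<Sum>c\<in>Fib. \<Sum>\<beta>\<in>Base. \<Sum>d\<in>Fib. \<Sum>\<phi>\<in>Fib. ?T c d \<beta> \<phi>)"
      by (rule sum.cong[OF refl], rule sum.swap)
    also have "\<dots> = (\<Sum>\<beta>\<in>Base. \<Sum>c\<in>Fib. \<Sum>d\<in>Fib. \<Sum>\<phi>\<in>Fib. ?T c d \<beta> \<phi>)"
      by (rule sum.swap)
    also have "\<dots> = (\<Sum>\<beta>\<in>Base. \<Sum>c\<in>Fib. \<Sum>\<phi>\<in>Fib. \<Sum>d\<in>Fib. ?T c d \<beta> \<phi>)"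
      by (rule sum.cong[OF refl], rule sum.cong[OF refl], rule sum.swap)
    also have "\<dots> = (\<Sum>\<beta>\<in>Base. \<Sum>\<phi>\<in>Fib. \<Sum>c\<in>Fib. \<Sum>d\<in>Fib. ?T c d \<beta> \<phi>)"
      by (rule sum.cong[OF refl], rule sum.swap)
    finally show ?thesis .
  qed
  finally show ?thesis
    by (simp add: sum.distrib[symmetric] sum_subtractf left_diff_distrib sum_distrib_right sum_negf)
qed

lemma B_space_swap:
  assumes x: "x \<in> B_space" and \<beta>: "\<beta> \<in> Base" and \<phi>: "\<phi> \<in> Fib"
  shows "x (u @ [\<beta>, \<phi>] @ v) = x (u @ [\<phi>, \<beta>] @ v) + (\<Sum>c\<in>Fib. \<Sum>d\<in>Fib. D \<beta> \<phi> c d * x (u @ [c, d] @ v))"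
proof -
  define r where "r \<beta> \<phi> = x (u @ [\<beta>, \<phi>] @ v) - x (u @ [\<phi>, \<beta>] @ v) - (\<Sum>c\<in>Fib. \<Sum>d\<in>Fib. D \<beta> \<phi> c d * x (u @ [c, d] @ v))" for \<beta> \<phi>
  have "r \<beta> \<phi> = 0"
  proof (rule wedge_Base_Fib_indep[OF _ \<beta> \<phi>])
    fix z assume z: "z \<in> Dom"
    have "chen_cond Aset (\<lambda>a b. wedge a b z) x" using x z unfolding B_space_iff_chen_cond by blast
    then have "(\<Sum>a\<in>Aset. \<Sum>b\<in>Aset. x (u @ [a, b] @ v) * wedge a b z) = 0" unfolding chen_cond_def by blast
    then show "(\<Sum>\<beta>\<in>Base. \<Sum>\<phi>\<in>Fib. r \<beta> \<phi> * wedge \<beta> \<phi> z) = 0"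
      unfolding chen_sum_expand[OF z] r_def .
  qed
  then show ?thesis by (simp add: r_def algebra_simps)
qed

definition base_count :: "letter list \<Rightarrow> nat" where "base_count w = length (filter (\<lambda>a. a \<in> Base) w)"

primrec inversions :: "letter list \<Rightarrow> nat" where
  "inversions [] = 0"
| "inversions (a # w) = (if a \<in> Base then length (filter (\<lambda>b. b \<in> Fib) w) else 0) + inversions w"

lemma inversions_swap:
  assumes \<beta>: "\<beta> \<in> Base" and \<phi>: "\<phi> \<in> Fib"
  shows "inversions (u @ [\<phi>, \<beta>] @ v) < inversions (u @ [\<beta>, \<phi>] @ v)"
proof (induction u)
  case Nil
  have "\<phi> \<notin> Base" "\<beta> \<notin> Fib" using Fib_not_Base \<beta> \<phi> by blast+
  then show ?case using \<beta> \<phi> by simp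
next
  case (Cons a u)
  then show ?case by simp
qed

lemma base_count_swap: "base_count (u @ [\<phi>, \<beta>] @ v) = base_count (u @ [\<beta>, \<phi>] @ v)"
  by (simp add: base_count_def)

lemma base_count_contract: "\<beta> \<in> Base \<Longrightarrow> c \<in> Fib \<Longrightarrow> d \<in> Fib \<Longrightarrow> base_count (u @ [c, d] @ v) < base_count (u @ [\<beta>, \<phi>] @ v)"
  using Fib_not_Base by (auto simp: base_count_def)

lemma sorted_or_inversion:
  "w \<in> lists Aset \<Longrightarrow> (\<exists>s q. w = s @ q \<and> s \<in> lists Fib \<and> q \<in> lists Base) \<or>
     (\<exists>u \<beta> \<phi> v. w = u @ [\<beta>, \<phi>] @ v \<and> \<beta> \<in> Base \<and> \<phi> \<in> Fib)"
proof (induction w)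
  case Nil
  then show ?case by auto
next
  case (Cons a w)
  have a: "a \<in> Fib \<or> a \<in> Base" using Cons.prems Aset_split by auto
  from Cons.IH Cons.prems have "(\<exists>s q. w = s @ q \<and> s \<in> lists Fib \<and> q \<in> lists Base) \<or>
     (\<exists>u \<beta> \<phi> v. w = u @ [\<beta>, \<phi>] @ v \<and> \<beta> \<in> Base \<and> \<phi> \<in> Fib)" by simp
  then show ?case
  proof
    assume "\<exists>s q. w = s @ q \<and> s \<in> lists Fib \<and> q \<in> lists Base"
    then obtain s q where w: "w = s @ q" "s \<in> lists Fib" "q \<in> lists Base" by blast
    show ?thesis
    proof (cases "a \<in> Fib")
      case True
      then have "a # w = (a # s) @ q \<and> a # s \<in> lists Fib \<and> q \<in> lists Base" using w by simp
      then show ?thesis by blast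
    next
      case False
      with a have aB: "a \<in> Base" by blast
      show ?thesis
      proof (cases s)
        case Nil
        then have "a # w = [] @ (a # q) \<and> [] \<in> lists Fib \<and> a # q \<in> lists Base" using w aB by simp
        then show ?thesis by blast
      next
        case (Cons b s')
        then have "a # w = [] @ [a, b] @ (s' @ q) \<and> a \<in> Base \<and> b \<in> Fib" using w aB by simp
        then show ?thesis by blast
      qed
    qed
  next
    assume "\<exists>u \<beta> \<phi> v. w = u @ [\<beta>, \<phi>] @ v \<and> \<beta> \<in> Base \<and> \<phi> \<in> Fib"
    then obtain u \<beta> \<phi> v where "w = u @ [\<beta>, \<phi>] @ v" "\<beta> \<in> Base" "\<phi> \<in> Fib" by blast
    then have "a # w = (a # u) @ [\<beta>, \<phi>] @ v \<and> \<beta> \<in> Base \<and> \<phi> \<in> Fib" by simp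
    then show ?thesis by blast
  qed
qed

lemma vanish_from_sorted:
  assumes outside: "\<And>w. w \<notin> lists Aset \<Longrightarrow> d w = 0"
    and swap: "\<And>u v \<beta> \<phi>. \<beta> \<in> Base \<Longrightarrow> \<phi> \<in> Fib \<Longrightarrow>
       d (u @ [\<beta>, \<phi>] @ v) = d (u @ [\<phi>, \<beta>] @ v) + (\<Sum>c\<in>Fib. \<Sum>e\<in>Fib. D \<beta> \<phi> c e * d (u @ [c, e] @ v))"
    and sorted: "\<And>s q. s \<in> lists Fib \<Longrightarrow> q \<in> lists Base \<Longrightarrow> d (s @ q) = 0"
  shows "d w = 0"
proof (induction w rule: wf_induct[OF wf_measures[of "[base_count, inversions]"]])
  case (1 w)
  show ?case
  proof (cases "w \<in> lists Aset")
    case False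
    then show ?thesis by (rule outside)
  next
    case True
    from sorted_or_inversion[OF True] show ?thesis
    proof (elim disjE exE conjE)
      fix s q assume "w = s @ q" "s \<in> lists Fib" "q \<in> lists Base"
      then show ?thesis using sorted by blast
    next
      fix u \<beta> \<phi> v assume w: "w = u @ [\<beta>, \<phi>] @ v" and \<beta>: "\<beta> \<in> Base" and \<phi>: "\<phi> \<in> Fib"
      have "d (u @ [\<phi>, \<beta>] @ v) = 0"
        using 1 inversions_swap[OF \<beta> \<phi>, of u v] base_count_swap[of u \<phi> \<beta> v] w by simp
      moreover have "d (u @ [c, e] @ v) = 0" if "c \<in> Fib" "e \<in> Fib" for c e
        using 1 base_count_contract[OF \<beta> that, of u v \<phi>] w by simp
      ultimately show ?thesis using swap[OF \<beta> \<phi>, of u v] w by simp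
    qed
  qed
qed

lemma kF_commute:
  assumes x: "x \<in> B_space"
  shows "q \<in> lists Base \<Longrightarrow> x (u @ [kF] @ q) = x (u @ q @ [kF])"
proof (induction q arbitrary: u)
  case Nil
  then show ?case by simp
next
  case (Cons \<beta> q)
  have \<beta>: "\<beta> \<in> Base" and q: "q \<in> lists Base" using Cons.prems by auto
  have "x (u @ [kF] @ \<beta> # q) = x (u @ [\<beta>, kF] @ q)"
    using B_space_swap[OF x \<beta> kF, of u q] by (simp add: D_kF)
  also have "\<dots> = x ((u @ [\<beta>]) @ [kF] @ q)" by simp
  also have "\<dots> = x ((u @ [\<beta>]) @ q @ [kF])" by (rule Cons.IH[OF q])
  finally show ?case by simp
qed

lemma kF_last_not_S0word: "last w = kF \<Longrightarrow> w \<noteq> [] \<Longrightarrow> \<not> S0word w"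
  using kF_kB by (auto simp: S0word_def doubleton_eq_iff)

lemma kB_last_not_S0word: "last w = kB \<Longrightarrow> w \<noteq> [] \<Longrightarrow> \<not> S0word w"
  using kF_kB by (auto simp: S0word_def doubleton_eq_iff)

lemma B0_space_kF_before_Base: "x \<in> B0_space \<Longrightarrow> q \<in> lists Base \<Longrightarrow> x (u @ [kF] @ q) = 0"
  using kF_commute[OF B0_space_B_space] B0_space_S0word kF_last_not_S0word by (metis append_is_Nil_conv last_appendR last_snoc not_Cons_self2)

lemma supp_iota:
  assumes "(p, q) \<in> supp (iota f g x)"
  shows "p \<in> lists A1" "q \<in> lists Base" "glue (p, q) \<in> supp x"
  using assms by (auto simp: supp_def iota_eq split: if_splits)

lemma finite_supp_iota:
  assumes "finite (supp x)"
  shows "finite (supp (iota f g x))"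
proof (rule finite_imageD)
  have "glue ` supp (iota f g x) \<subseteq> supp x"
    using supp_iota(3) by auto
  then show "finite (glue ` supp (iota f g x))"
    using assms by (rule finite_subset)
  show "inj_on glue (supp (iota f g x))"
    by (rule inj_on_subset[OF inj_on_glue]) (auto dest: supp_iota)
qed

lemma S0word_iota_fst:
  assumes x: "x \<in> B0_space" and pq: "(p, q) \<in> supp (iota f g x)"
  shows "S0word p"
proof (rule ccontr)
  assume "\<not> S0word p"
  then have p: "p \<noteq> []" "last p \<in> {Z1, Z2}" by (auto simp: S0word_def)
  have "last p \<in> A1" using p(1) supp_iota(1)[OF pq] by (metis in_listsD last_in_set)
  then have "last (map h p) = kF" using p kF_kB kB_notin_A1 h_kF by (auto simp: last_map)
  then obtain u where u: "map h p = u @ [kF]"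
    using p(1) by (metis append_butlast_last_id list.map_disc_iff)
  have "x (map h p @ q) \<noteq> 0" using supp_iota(3)[OF pq] by (simp add: supp_def)
  moreover have "x (map h p @ q) = 0"
  proof (cases "q = []")
    case True
    then show ?thesis using B0_space_S0word[OF x] kF_last_not_S0word u by simp
  next
    case False
    then show ?thesis using u B0_space_kF_before_Base[OF x supp_iota(2)[OF pq]] by simp
  qed
  ultimately show False by contradiction
qed

lemma S0word_iota_snd:
  assumes x: "x \<in> B0_space" and pq: "(p, q) \<in> supp (iota f g x)"
  shows "S0word q"
proof (rule ccontr)
  assume "\<not> S0word q"
  then have q: "q \<noteq> []" "last q \<in> {Z1, Z2}" by (auto simp: S0word_def)
  have "last q \<in> Base" using q(1) supp_iota(2)[OF pq] by (metis in_listsD last_in_set)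
  then have "last (map h p @ q) = kB" using q kF_kB kF Fib_not_Base by auto
  then have "x (map h p @ q) = 0" using B0_space_S0word[OF x] kB_last_not_S0word q(1) by simp
  then show False using supp_iota(3)[OF pq] by (simp add: supp_def)
qed

lemma iota_in_tensor_S0:
  assumes "x \<in> B0_space"
  shows "iota f g x \<in> tensor_S0 A1 Base"
  using finite_supp_iota[OF B0_space_finite_supp[OF assms]] supp_iota
    S0word_iota_fst[OF assms] S0word_iota_snd[OF assms]
  unfolding tensor_S0_def by blast

lemma iota_inj:
  assumes x: "x \<in> B0_space" and y: "y \<in> B0_space" and eq: "iota f g x = iota f g y"
  shows "x = y"
proof -
  have "(\<lambda>w. x w - y w) w = 0" for w
  proof (rule vanish_from_sorted)
    fix w :: "letter list" assume w: "w \<notin> lists Aset"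
    then show "x w - y w = 0" using B0_space_outside[OF x w] B0_space_outside[OF y w] by simp
  next
    fix u v \<beta> \<phi> assume \<beta>: "\<beta> \<in> Base" and \<phi>: "\<phi> \<in> Fib"
    show "x (u @ [\<beta>, \<phi>] @ v) - y (u @ [\<beta>, \<phi>] @ v) =
       x (u @ [\<phi>, \<beta>] @ v) - y (u @ [\<phi>, \<beta>] @ v) +
       (\<Sum>c\<in>Fib. \<Sum>e\<in>Fib. D \<beta> \<phi> c e * (x (u @ [c, e] @ v) - y (u @ [c, e] @ v)))"
      using B_space_swap[OF B0_space_B_space[OF x] \<beta> \<phi>, of u v] B_space_swap[OF B0_space_B_space[OF y] \<beta> \<phi>, of u v]
      by (simp add: right_diff_distrib sum_subtractf)
  next
    fix s q assume s: "s \<in> lists Fib" and q: "q \<in> lists Base"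
    have "iota f g x (map h s, q) = iota f g y (map h s, q)" using eq by simp
    then show "x (s @ q) - y (s @ q) = 0"
      using map_h_Fib[OF s] q by (simp add: iota_eq h_comp_h)
  qed
  then show ?thesis by auto
qed

lemma sorted_supp_eq_glue_image:
  "{u \<in> supp x. fb_sorted Fib Base u} = glue ` supp (iota f g x)"
proof
  show "glue ` supp (iota f g x) \<subseteq> {u \<in> supp x. fb_sorted Fib Base u}"
    using supp_iota map_h_A1 by (fastforce simp: fb_sorted_def)
  show "{u \<in> supp x. fb_sorted Fib Base u} \<subseteq> glue ` supp (iota f g x)"
  proof clarify
    fix u assume "u \<in> supp x" "fb_sorted Fib Base u"
    then obtain s q where u: "u = s @ q" "s \<in> lists Fib" "q \<in> lists Base" "x u \<noteq> 0"
      by (auto simp: fb_sorted_def supp_def)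
    then have "(map h s, q) \<in> supp (iota f g x)"
      using map_h_Fib by (simp add: supp_def iota_eq h_comp_h)
    moreover have "u = glue (map h s, q)" using u by (simp add: h_comp_h)
    ultimately show "u \<in> glue ` supp (iota f g x)" by blast
  qed
qed

lemma shw_glue:
  assumes "p1 \<in> lists A1" "q1 \<in> lists Base" "p2 \<in> lists A1" "q2 \<in> lists Base"
    and "p \<in> lists A1" "q \<in> lists Base"
  shows "shw (glue (p1, q1)) (glue (p2, q2)) (glue (p, q)) = shw p1 p2 p * shw q1 q2 q"
  using shw_fb_sorted_split[OF Fib_Base_disjoint assms(6,2,4) map_h_A1[OF assms(5)]
      map_h_A1[OF assms(1)] map_h_A1[OF assms(3)]]
  by (simp add: shw_map[OF inj_h])

lemma tshuffle_iota_outside: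
  assumes "(p, q) \<notin> lists A1 \<times> lists Base"
  shows "tshuffle (iota f g x) (iota f g y) (p, q) = 0"
  unfolding tshuffle_def case_prod_conv
proof (rule sum.neutral, clarify)
  fix p1 q1 p2 q2
  assume "(p1, q1) \<in> supp (iota f g x)" "(p2, q2) \<in> supp (iota f g y)"
  then have "p1 \<in> lists A1" "q1 \<in> lists Base" "p2 \<in> lists A1" "q2 \<in> lists Base"
    using supp_iota by blast+
  then have "shw p1 p2 p = 0 \<or> shw q1 q2 q = 0"
    using assms shw_set[of p1 p2 p] shw_set[of q1 q2 q] by (auto simp: lists_eq_set)
  then show "iota f g x (p1, q1) * iota f g y (p2, q2) * shw p1 p2 p * shw q1 q2 q = 0"
    by auto
qed

text \<open>Only sorted words contribute to the shuffle at a sorted word, and on sorted words the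
  shuffle factorises into the shuffles of the two components.\<close>

lemma iota_shuffle:
  assumes x: "x \<in> B0_space" and y: "y \<in> B0_space"
  shows "iota f g (shuffle x y) = tshuffle (iota f g x) (iota f g y)"
proof (rule ext, clarify)
  fix p q
  show "iota f g (shuffle x y) (p, q) = tshuffle (iota f g x) (iota f g y) (p, q)"
  proof (cases "(p, q) \<in> lists A1 \<times> lists Base")
    case False
    then show ?thesis using tshuffle_iota_outside by (auto simp: iota_eq)
  next
    case True
    then have p: "p \<in> lists A1" and q: "q \<in> lists Base" by auto
    let ?X = "supp (iota f g x)" and ?Y = "supp (iota f g y)"
    define G where "G = (\<lambda>(u, v). x u * y v * shw u v (glue (p, q)))"
    have fx: "finite (supp x)" and fy: "finite (supp y)"
      using x y B0_space_finite_supp by auto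
    have inj: "inj_on (map_prod glue glue) (?X \<times> ?Y)"
      by (intro map_prod_inj_on inj_on_subset[OF inj_on_glue]) (auto dest: supp_iota)
    have "iota f g (shuffle x y) (p, q) = shuffle x y (map h p @ q)"
      using True by (simp add: iota_eq)
    also have "\<dots> = sum G (glue ` ?X \<times> glue ` ?Y)"
      using shuffle_at_fb_sorted[OF fx fy map_h_A1[OF p] q]
      by (simp add: sorted_supp_eq_glue_image G_def)
    also have "glue ` ?X \<times> glue ` ?Y = map_prod glue glue ` (?X \<times> ?Y)"
      by (rule map_prod_surj_on[symmetric]) (rule refl)+
    also have "sum G (map_prod glue glue ` (?X \<times> ?Y)) = sum (G \<circ> map_prod glue glue) (?X \<times> ?Y)"
      by (rule sum.reindex[OF inj])
    also have "\<dots> = tshuffle (iota f g x) (iota f g y) (p, q)"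
      unfolding tshuffle_def case_prod_conv
    proof (rule sum.cong[OF refl], clarify)
      fix p1 q1 p2 q2
      assume "(p1, q1) \<in> ?X" "(p2, q2) \<in> ?Y"
      then have "p1 \<in> lists A1" "q1 \<in> lists Base" "p2 \<in> lists A1" "q2 \<in> lists Base"
        using supp_iota by blast+
      then show "(G \<circ> map_prod glue glue) ((p1, q1), p2, q2) =
          iota f g x (p1, q1) * iota f g y (p2, q2) * shw p1 p2 p * shw q1 q2 q"
        using shw_glue[OF _ _ _ _ p q] by (simp add: G_def iota_eq)
    qed
    finally show ?thesis .
  qed
qed

lemma iota_unit: "iota f g unit_S = unit_T"
proof (rule ext, clarify)
  fix p q
  show "iota f g unit_S (p, q) = unit_T (p, q)"
    by (auto simp: iota_eq unit_S_def unit_T_def delta_def)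
qed

text \<open>\<open>extend Y\<close> is the element of \<open>B\<close> with sorted coefficients \<open>Y\<close>: reading a word from the
  left, a fibre letter goes to the first component, and a base letter goes to the second
  component after being commuted, by the relation above, past every fibre letter.\<close>

definition letter_act :: "letter \<Rightarrow> tens \<Rightarrow> tens" where
  "letter_act a Y = (\<lambda>(p, q). if a \<in> Fib then Y (a # p, q)
     else if a \<in> Base then Y (p, a # q) +
       (\<Sum>i<length p. \<Sum>c\<in>Fib. \<Sum>d\<in>Fib. D a (p ! i) c d * Y (take i p @ [c, d] @ drop (Suc i) p, q))
     else 0)"

primrec extend :: "tens \<Rightarrow> letter list \<Rightarrow> complex" where
  "extend Y [] = Y ([], [])"
| "extend Y (a # w) = extend (letter_act a Y) w"

primrec word_act :: "letter list \<Rightarrow> tens \<Rightarrow> tens" where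
  "word_act [] Y = Y"
| "word_act (a # u) Y = word_act u (letter_act a Y)"

lemma letter_act_Fib: "a \<in> Fib \<Longrightarrow> letter_act a Y (p, q) = Y (a # p, q)"
  by (simp add: letter_act_def)

lemma letter_act_Base: "a \<in> Base \<Longrightarrow> letter_act a Y (p, q) = Y (p, a # q) +
       (\<Sum>i<length p. \<Sum>c\<in>Fib. \<Sum>d\<in>Fib. D a (p ! i) c d * Y (take i p @ [c, d] @ drop (Suc i) p, q))"
  using Fib_not_Base by (auto simp: letter_act_def)

lemma letter_act_outside: "a \<notin> Aset \<Longrightarrow> letter_act a Y (p, q) = 0"
  using Aset_split by (auto simp: letter_act_def)

lemma letter_act_add: "letter_act a (\<lambda>pq. Y1 pq + Y2 pq) = (\<lambda>pq. letter_act a Y1 pq + letter_act a Y2 pq)"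
  by (rule ext) (auto simp: letter_act_def sum.distrib distrib_left)

lemma letter_act_scale: "letter_act a (\<lambda>pq. k * Y pq) = (\<lambda>pq. k * letter_act a Y pq)"
  by (rule ext) (auto simp: letter_act_def sum_distrib_left distrib_left mult_ac)

lemma letter_act_zero: "letter_act a (\<lambda>pq. 0) = (\<lambda>pq. 0)"
  by (rule ext) (auto simp: letter_act_def)

lemma extend_add: "extend (\<lambda>pq. Y1 pq + Y2 pq) w = extend Y1 w + extend Y2 w"
  by (induction w arbitrary: Y1 Y2) (simp_all add: letter_act_add)

lemma extend_scale: "extend (\<lambda>pq. k * Y pq) w = k * extend Y w"
  by (induction w arbitrary: Y) (simp_all add: letter_act_scale)

lemma extend_zero: "extend (\<lambda>pq. 0) w = 0"
  by (induction w) (simp_all add: letter_act_zero)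

lemma extend_sum: "finite I \<Longrightarrow> extend (\<lambda>pq. \<Sum>i\<in>I. k i * Y i pq) w = (\<Sum>i\<in>I. k i * extend (Y i) w)"
proof (induction I rule: finite_induct)
  case empty
  then show ?case by (simp add: extend_zero)
next
  case (insert x F)
  have "extend (\<lambda>pq. \<Sum>i\<in>insert x F. k i * Y i pq) w = extend (\<lambda>pq. k x * Y x pq + (\<Sum>i\<in>F. k i * Y i pq)) w"
    using insert.hyps by simp
  also have "\<dots> = k x * extend (Y x) w + extend (\<lambda>pq. \<Sum>i\<in>F. k i * Y i pq) w"
    by (simp add: extend_add extend_scale)
  finally show ?case using insert by simp
qed

lemma extend_append: "extend Y (u @ w) = extend (word_act u Y) w"
  by (induction u arbitrary: Y) simp_all

lemma extend_Base: "q \<in> lists Base \<Longrightarrow> extend Y q = Y ([], q)"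
proof (induction q arbitrary: Y)
  case Nil then show ?case by simp
next
  case (Cons \<beta> q)
  then show ?case by (simp add: letter_act_Base)
qed

lemma extend_sorted: "s \<in> lists Fib \<Longrightarrow> q \<in> lists Base \<Longrightarrow> extend Y (s @ q) = Y (s, q)"
proof (induction s arbitrary: Y)
  case Nil then show ?case by (simp add: extend_Base)
next
  case (Cons \<phi> s)
  then show ?case by (simp add: letter_act_Fib)
qed

lemma extend_outside: "w \<notin> lists Aset \<Longrightarrow> extend Y w = 0"
proof (induction w arbitrary: Y)
  case Nil then show ?case by simp
next
  case (Cons a w)
  show ?case
  proof (cases "a \<in> Aset")
    case True
    then show ?thesis using Cons by simp
  next
    case False
    then have "letter_act a Y = (\<lambda>pq. 0)" by (auto simp: letter_act_outside)
    then show ?thesis by (simp add: extend_zero)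
  qed
qed

lemma extend_length: "(\<And>p q. length p + length q = length w \<Longrightarrow> Y (p, q) = 0) \<Longrightarrow> extend Y w = 0"
proof (induction w arbitrary: Y)
  case Nil then show ?case by simp
next
  case (Cons a w)
  have "letter_act a Y (p, q) = 0" if "length p + length q = length w" for p q
  proof -
    have z: "Y (p', q') = 0" if "length p' + length q' = Suc (length w)" for p' q'
      using Cons.prems that by simp
    have s0: "Y (take i p @ c # d # drop (Suc i) p, q) = 0" if i: "i < length p" for i c d
    proof (rule z)
      show "length (take i p @ c # d # drop (Suc i) p) + length q = Suc (length w)"
        using i \<open>length p + length q = length w\<close> by simp
    qed
    have s: "(\<Sum>i<length p. \<Sum>c\<in>Fib. \<Sum>d\<in>Fib. D a (p ! i) c d * Y (take i p @ [c, d] @ drop (Suc i) p, q)) = 0"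
      by (intro sum.neutral ballI) (simp add: s0)
    show ?thesis
      using z[of "a # p" q] z[of p "a # q"] s that by (auto simp: letter_act_def)
  qed
  then show ?case using Cons.IH[of "letter_act a Y"] by simp
qed

definition ends_k :: "letter list \<Rightarrow> letter list \<Rightarrow> bool" where
  "ends_k p q \<longleftrightarrow> (p \<noteq> [] \<and> last p = kF) \<or> (q \<noteq> [] \<and> last q = kB)"

lemma letter_act_ends_k:
  assumes Y: "\<And>p q. ends_k p q \<Longrightarrow> Y (p, q) = 0" and pq: "ends_k p q"
  shows "letter_act a Y (p, q) = 0"
proof -
  consider "a \<in> Fib" | "a \<in> Base" | "a \<notin> Aset" using Aset_split by blast
  then show ?thesis
  proof cases
    case 1
    have "ends_k (a # p) q" using pq by (auto simp: ends_k_def)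
    then show ?thesis using 1 Y by (simp add: letter_act_Fib)
  next
    case 2
    have 1: "ends_k p (a # q)" using pq by (auto simp: ends_k_def)
    have 3: "D a (p ! i) c d * Y (take i p @ c # d # drop (Suc i) p, q) = 0"
      if i: "i < length p" for i c d
    proof (cases "q \<noteq> [] \<and> last q = kB")
      case True
      then have "ends_k (take i p @ [c, d] @ drop (Suc i) p) q" by (simp add: ends_k_def)
      then show ?thesis using Y by simp
    next
      case False
      then have p: "p \<noteq> []" "last p = kF" using pq by (auto simp: ends_k_def)
      show ?thesis
      proof (cases "Suc i = length p")
        case True
        then have "p ! i = kF" using p by (metis diff_Suc_1 last_conv_nth)
        then show ?thesis by (simp add: D_kF)
      next
        case False
        then have "drop (Suc i) p \<noteq> []" using i by simp
        then have "last (take i p @ [c, d] @ drop (Suc i) p) = last p" by simp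
        then have "ends_k (take i p @ [c, d] @ drop (Suc i) p) q" using p by (simp add: ends_k_def)
        then show ?thesis using Y by simp
      qed
    qed
    have "(\<Sum>i<length p. \<Sum>c\<in>Fib. \<Sum>d\<in>Fib. D a (p ! i) c d * Y (take i p @ c # d # drop (Suc i) p, q)) = 0"
      by (intro sum.neutral ballI) (use 3 in simp)
    then show ?thesis using 2 Y[OF 1] by (simp add: letter_act_Base)
  next
    case 3
    then show ?thesis by (simp add: letter_act_outside)
  qed
qed

lemma word_act_ends_k: "(\<And>p q. ends_k p q \<Longrightarrow> Y (p, q) = 0) \<Longrightarrow> ends_k p q \<Longrightarrow> word_act u Y (p, q) = 0"
proof (induction u arbitrary: Y)
  case Nil then show ?case by simp
next
  case (Cons a u)
  have "\<And>p q. ends_k p q \<Longrightarrow> letter_act a Y (p, q) = 0" using letter_act_ends_k Cons.prems(1) by blast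
  then show ?case using Cons.IH Cons.prems(2) by simp
qed

lemma extend_last_k:
  assumes Y: "\<And>p q. ends_k p q \<Longrightarrow> Y (p, q) = 0" and w: "w \<noteq> []" "last w \<in> {kF, kB}"
  shows "extend Y w = 0"
proof -
  obtain w' a where wa: "w = w' @ [a]" using w(1) by (metis append_butlast_last_id)
  have a: "a = kF \<or> a = kB" using w(2) wa by simp
  define Z where "Z = word_act w' Y"
  have Z: "\<And>p q. ends_k p q \<Longrightarrow> Z (p, q) = 0" unfolding Z_def using word_act_ends_k Y by blast
  have "extend Y w = letter_act a Z ([], [])" by (simp add: wa extend_append Z_def)
  also have "\<dots> = 0"
  proof (cases "a = kF")
    case True
    then show ?thesis using Z[of "[kF]" "[]"] kF by (simp add: letter_act_Fib ends_k_def)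
  next
    case False
    then have "a = kB" using a by blast
    then show ?thesis using Z[of "[]" "[kB]"] kB by (simp add: letter_act_Base ends_k_def)
  qed
  finally show ?thesis .
qed

lemma letter_act_swap:
  assumes \<beta>: "\<beta> \<in> Base" and \<phi>: "\<phi> \<in> Fib"
  shows "letter_act \<phi> (letter_act \<beta> U) (p, q) - letter_act \<beta> (letter_act \<phi> U) (p, q)
     - (\<Sum>c\<in>Fib. \<Sum>d\<in>Fib. D \<beta> \<phi> c d * letter_act d (letter_act c U) (p, q)) = 0"
proof -
  define S where "S = (\<Sum>i<length p. \<Sum>c\<in>Fib. \<Sum>d\<in>Fib. D \<beta> (p ! i) c d * U (\<phi> # (take i p @ [c, d] @ drop (Suc i) p), q))"
  define F where "F i = (\<Sum>c\<in>Fib. \<Sum>d\<in>Fib. D \<beta> ((\<phi> # p) ! i) c d * U (take i (\<phi> # p) @ [c, d] @ drop (Suc i) (\<phi> # p), q))" for i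
  have "letter_act \<phi> (letter_act \<beta> U) (p, q) = letter_act \<beta> U (\<phi> # p, q)" by (simp add: letter_act_Fib \<phi>)
  also have "\<dots> = U (\<phi> # p, \<beta> # q) + (\<Sum>i<length (\<phi> # p). F i)"
    unfolding F_def by (subst letter_act_Base[OF \<beta>]) (rule refl)
  also have "(\<Sum>i<length (\<phi> # p). F i) = F 0 + (\<Sum>i<length p. F (Suc i))"
    by (simp only: length_Cons sum.lessThan_Suc_shift)
  also have "F 0 = (\<Sum>c\<in>Fib. \<Sum>d\<in>Fib. D \<beta> \<phi> c d * U (c # d # p, q))"
    by (simp add: F_def)
  also have "(\<Sum>i<length p. F (Suc i)) = S"
    by (simp add: F_def S_def)
  finally have 1: "letter_act \<phi> (letter_act \<beta> U) (p, q) = U (\<phi> # p, \<beta> # q) + (\<Sum>c\<in>Fib. \<Sum>d\<in>Fib. D \<beta> \<phi> c d * U (c # d # p, q)) + S"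
    by simp
  have 2: "letter_act \<beta> (letter_act \<phi> U) (p, q) = U (\<phi> # p, \<beta> # q) + S"
    using \<beta> \<phi> by (simp add: letter_act_Fib letter_act_Base S_def)
  have 3: "(\<Sum>c\<in>Fib. \<Sum>d\<in>Fib. D \<beta> \<phi> c d * letter_act d (letter_act c U) (p, q)) = (\<Sum>c\<in>Fib. \<Sum>d\<in>Fib. D \<beta> \<phi> c d * U (c # d # p, q))"
    by (intro sum.cong refl) (simp add: letter_act_Fib)
  show ?thesis unfolding 1 2 3 by simp
qed

lemma extend_chen:
  assumes z: "z \<in> Dom"
  shows "(\<Sum>a\<in>Aset. \<Sum>b\<in>Aset. extend Y (u @ [a, b] @ v) * wedge a b z) = 0"
proof -
  define U where "U = word_act u Y"
  have e: "extend Y (u @ [a, b] @ v) = extend (letter_act b (letter_act a U)) v" for a b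
    by (simp add: extend_append U_def)
  have "(\<Sum>a\<in>Aset. \<Sum>b\<in>Aset. extend Y (u @ [a, b] @ v) * wedge a b z)
      = (\<Sum>a\<in>Aset. \<Sum>b\<in>Aset. wedge a b z * extend (letter_act b (letter_act a U)) v)"
    by (intro sum.cong refl) (simp only: e mult.commute)
  also have "\<dots> = (\<Sum>ab\<in>Aset \<times> Aset. wedge (fst ab) (snd ab) z * extend (letter_act (snd ab) (letter_act (fst ab) U)) v)"
    by (simp add: sum.cartesian_product case_prod_beta)
  also have "\<dots> = extend (\<lambda>pq. \<Sum>ab\<in>Aset \<times> Aset. wedge (fst ab) (snd ab) z * letter_act (snd ab) (letter_act (fst ab) U) pq) v"
    by (rule extend_sum[symmetric]) (simp add: finite_Aset)
  also have "(\<lambda>pq. \<Sum>ab\<in>Aset \<times> Aset. wedge (fst ab) (snd ab) z * letter_act (snd ab) (letter_act (fst ab) U) pq) = (\<lambda>pq. 0)"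
  proof
    fix pq :: "letter list \<times> letter list"
    obtain p q where pq: "pq = (p, q)" by (cases pq)
    have "(\<Sum>ab\<in>Aset \<times> Aset. wedge (fst ab) (snd ab) z * letter_act (snd ab) (letter_act (fst ab) U) pq)
        = (\<Sum>a\<in>Aset. \<Sum>b\<in>Aset. letter_act b (letter_act a U) (p, q) * wedge a b z)"
      by (simp add: pq sum.cartesian_product case_prod_beta mult_ac)
    also have "\<dots> = 0"
      unfolding chen_sum_expand[OF z] using letter_act_swap by simp
    finally show "(\<Sum>ab\<in>Aset \<times> Aset. wedge (fst ab) (snd ab) z * letter_act (snd ab) (letter_act (fst ab) U) pq) = 0" .
  qed
  finally show ?thesis by (simp add: extend_zero)
qed

lemma finite_supp_extend:
  assumes fY: "finite (supp Y)"
  shows "finite (supp (extend Y))"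
proof -
  define N where "N = Max ((\<lambda>(p, q). length p + length q) ` supp Y)"
  have N: "length p + length q \<le> N" if "Y (p, q) \<noteq> 0" for p q
  proof -
    have "(p, q) \<in> supp Y" using that by (simp add: supp_def)
    then show ?thesis
      unfolding N_def by (rule Max_ge[OF finite_imageI[OF fY], OF rev_image_eqI]) simp
  qed
  have "supp (extend Y) \<subseteq> {w. set w \<subseteq> Aset \<and> length w \<le> N}"
  proof
    fix w assume w: "w \<in> supp (extend Y)"
    then have "w \<in> lists Aset" using extend_outside by (auto simp: supp_def)
    moreover have "length w \<le> N"
    proof (rule ccontr)
      assume "\<not> length w \<le> N"
      then have "extend Y w = 0" using N by (intro extend_length) force
      then show False using w by (simp add: supp_def)
    qed
    ultimately show "w \<in> {w. set w \<subseteq> Aset \<and> length w \<le> N}" by auto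
  qed
  then show ?thesis
    by (rule finite_subset[OF _ finite_lists_length_le[OF finite_Aset]])
qed

lemma extend_S0word:
  assumes "\<And>p q. ends_k p q \<Longrightarrow> Y (p, q) = 0" and "w \<in> supp (extend Y)"
  shows "S0word w"
proof (rule ccontr)
  assume "\<not> S0word w"
  then have "w \<noteq> []" "last w \<in> {kF, kB}" using kF_kB by (auto simp: S0word_def)
  then have "extend Y w = 0" using extend_last_k assms(1) by blast
  then show False using assms(2) by (simp add: supp_def)
qed

lemma extend_in_B0_space:
  assumes "finite (supp Y)" and "\<And>p q. ends_k p q \<Longrightarrow> Y (p, q) = 0"
  shows "extend Y \<in> B0_space"
proof -
  have "supp (extend Y) \<subseteq> lists Aset" using extend_outside by (auto simp: supp_def)
  moreover have "\<forall>z\<in>Dom. chen_cond Aset (\<lambda>a b. wedge a b z) (extend Y)"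
    unfolding chen_cond_def using extend_chen by blast
  ultimately show ?thesis
    using finite_supp_extend[OF assms(1)] extend_S0word[where Y = Y, OF assms(2)]
    unfolding B0_space_def B_space_iff_chen_cond S_space_def by blast
qed

lemma iota_extend:
  assumes "p \<in> lists A1" "q \<in> lists Base"
  shows "iota f g (extend Y) (p, q) = Y (map h p, q)"
  using assms extend_sorted[OF map_h_A1] by (simp add: iota_eq)

lemma iota_surj:
  assumes T: "T \<in> tensor_S0 A1 Base"
  shows "T \<in> iota f g ` B0_space"
proof -
  define Y where "Y = (\<lambda>(p, q). T (map h p, q))"
  have sT: "p \<in> lists A1 \<and> S0word p \<and> q \<in> lists Base \<and> S0word q" if "(p, q) \<in> supp T" for p q
    using T that unfolding tensor_S0_def by blast
  have "supp Y \<subseteq> map_prod (map h) id ` supp T"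
  proof clarify
    fix p q assume "(p, q) \<in> supp Y"
    then have "(map h p, q) \<in> supp T" by (simp add: Y_def supp_def)
    then show "(p, q) \<in> map_prod (map h) id ` supp T"
      by (rule rev_image_eqI) (simp add: h_comp_h)
  qed
  then have "finite (supp Y)"
    using T by (auto simp: tensor_S0_def intro: finite_subset)
  moreover have "Y (p, q) = 0" if "ends_k p q" for p q
  proof (rule ccontr)
    assume "Y (p, q) \<noteq> 0"
    then have S0: "S0word (map h p)" "S0word q" using sT by (auto simp: Y_def supp_def)
    from that show False
      unfolding ends_k_def
    proof (elim disjE conjE)
      assume "p \<noteq> []" "last p = kF"
      then have "map h p \<noteq> []" "last (map h p) = kF" by (simp_all add: last_map h_kF)
      then show False using kF_last_not_S0word S0(1) by blast
    next
      assume "q \<noteq> []" "last q = kB"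
      then show False using kB_last_not_S0word S0(2) by blast
    qed
  qed
  ultimately have "extend Y \<in> B0_space" by (rule extend_in_B0_space)
  moreover have "iota f g (extend Y) = T"
  proof (rule ext, clarify)
    fix p q
    show "iota f g (extend Y) (p, q) = T (p, q)"
    proof (cases "p \<in> lists A1 \<and> q \<in> lists Base")
      case True
      then show ?thesis by (simp add: iota_extend Y_def h_comp_h)
    next
      case False
      then have "(p, q) \<notin> supp T" using sT by blast
      then show ?thesis using False by (auto simp: iota_eq supp_def)
    qed
  qed
  ultimately show ?thesis by blast
qed

theorem iota_shuffle_iso:
  "bij_betw (iota f g) B0_space (tensor_S0 A1 Base) \<and> iota f g unit_S = unit_T \<and>
   (\<forall>x\<in>B0_space. \<forall>y\<in>B0_space. iota f g (shuffle x y) = tshuffle (iota f g x) (iota f g y))"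
proof (intro conjI ballI)
  show "bij_betw (iota f g) B0_space (tensor_S0 A1 Base)"
    unfolding bij_betw_def
  proof
    show "inj_on (iota f g) B0_space" by (auto intro: inj_onI iota_inj)
    show "iota f g ` B0_space = tensor_S0 A1 Base" using iota_in_tensor_S0 iota_surj by blast
  qed
  show "iota f g unit_S = unit_T" by (rule iota_unit)
  fix x y assume "x \<in> B0_space" "y \<in> B0_space"
  then show "iota f g (shuffle x y) = tshuffle (iota f g x) (iota f g y)" by (rule iota_shuffle)
qed

end

section \<open>The two restrictions\<close>

fun swap12a :: "letter \<Rightarrow> letter" where
  "swap12a Z12 = Z12a" | "swap12a Z12a = Z12" | "swap12a Z1 = Z1" | "swap12a Z11 = Z11"
| "swap12a Z2 = Z2" | "swap12a Z22 = Z22" | "swap12a Z12b = Z12b"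

fun swap12b :: "letter \<Rightarrow> letter" where
  "swap12b Z12 = Z12b" | "swap12b Z12b = Z12" | "swap12b Z1 = Z1" | "swap12b Z11 = Z11"
| "swap12b Z2 = Z2" | "swap12b Z22 = Z22" | "swap12b Z12a = Z12a"

lemma Dom_nonzero:
  assumes "(z1, z2) \<in> Dom"
  shows "z1 \<noteq> 0" "z2 \<noteq> 0" "1 - z1 \<noteq> 0" "1 - z2 \<noteq> 0" "1 - z1 * z2 \<noteq> 0"
    "1 \<noteq> z1" "1 \<noteq> z2" "1 \<noteq> z1 * z2"
  using assms by (auto simp: Dom_def)

lemma wedge_zero: "wedge a a z = 0" "wedge Z1 Z11 z = 0" "wedge Z11 Z1 z = 0"
  "wedge Z2 Z22 z = 0" "wedge Z22 Z2 z = 0"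
  by (cases z; simp add: wedge_def)+

lemma fraction_identity:
  fixes a b c z1 z2 :: complex
  assumes "a \<noteq> 0" "b \<noteq> 0" "c \<noteq> 0" "z1 * b + z2 * a = c - a * b"
  shows "z1 / (a * c) + z2 / (b * c) = 1 / (a * b) - 1 / c"
  using assms by (simp add: field_simps)

lemma wedge_relations:
  assumes z: "z \<in> Dom"
  shows "wedge Z11 Z12 z = - wedge Z22 Z11 z + wedge Z2 Z12 z + wedge Z22 Z12 z"
    "wedge Z1 Z12 z = - wedge Z2 Z12 z"
    "wedge Z22 Z12 z = - wedge Z11 Z22 z + wedge Z1 Z12 z + wedge Z11 Z12 z"
    "wedge Z2 Z12 z = - wedge Z1 Z12 z"
proof -
  obtain z1 z2 where zz: "z = (z1, z2)" by (cases z)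
  note nz = Dom_nonzero[OF z[unfolded zz]]
  define A where "A = z1 / ((1 - z1) * (1 - z1 * z2))"
  define B where "B = z2 / ((1 - z2) * (1 - z1 * z2))"
  define C where "C = 1 / ((1 - z1) * (1 - z2))"
  define E where "E = 1 / (1 - z1 * z2)"
  have v: "wedge Z11 Z12 z = A" "wedge Z22 Z12 z = - B" "wedge Z22 Z11 z = - C" "wedge Z11 Z22 z = C"
    "wedge Z2 Z12 z = - E" "wedge Z1 Z12 z = E"
    unfolding zz A_def B_def C_def E_def wedge_def using nz by (simp_all add: mult_ac)
  have f: "A + B = C - E" unfolding A_def B_def C_def E_def
    by (rule fraction_identity) (use nz in \<open>auto simp: algebra_simps\<close>)
  show "wedge Z11 Z12 z = - wedge Z22 Z11 z + wedge Z2 Z12 z + wedge Z22 Z12 z"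
    unfolding v using f by (simp add: algebra_simps)
  show "wedge Z1 Z12 z = - wedge Z2 Z12 z" unfolding v by simp
  show "wedge Z22 Z12 z = - wedge Z11 Z22 z + wedge Z1 Z12 z + wedge Z11 Z12 z"
    unfolding v using f by (simp add: algebra_simps)
  show "wedge Z2 Z12 z = - wedge Z1 Z12 z" unfolding v by simp
qed

lemma wedge_Z12_antisym: "wedge Z12 Z1 z = - wedge Z1 Z12 z" "wedge Z12 Z11 z = - wedge Z11 Z12 z"
  "wedge Z12 Z2 z = - wedge Z2 Z12 z" "wedge Z12 Z22 z = - wedge Z22 Z12 z"
  by (simp_all add: wedge_def)

text \<open>\<open>D1 \<beta> \<phi> c d\<close> is the coefficient of \<open>\<beta> \<and> \<phi>\<close> in \<open>- (c \<and> d)\<close>, read off from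
  \<open>wedge_relations\<close>; similarly \<open>D2\<close>.\<close>

definition D1 :: "letter \<Rightarrow> letter \<Rightarrow> letter \<Rightarrow> letter \<Rightarrow> complex" where
  "D1 b f c d = (if b = Z2 \<and> f = Z12 then
       (if c = Z1 \<and> d = Z12 then 1 else if c = Z12 \<and> d = Z1 then -1
        else if c = Z11 \<and> d = Z12 then -1 else if c = Z12 \<and> d = Z11 then 1 else 0)
     else if b = Z22 \<and> f = Z11 then
       (if c = Z11 \<and> d = Z12 then 1 else if c = Z12 \<and> d = Z11 then -1 else 0)
     else if b = Z22 \<and> f = Z12 then
       (if c = Z11 \<and> d = Z12 then -1 else if c = Z12 \<and> d = Z11 then 1 else 0)
     else 0)"

definition D2 :: "letter \<Rightarrow> letter \<Rightarrow> letter \<Rightarrow> letter \<Rightarrow> complex" where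
  "D2 b f c d = (if b = Z1 \<and> f = Z12 then
       (if c = Z2 \<and> d = Z12 then 1 else if c = Z12 \<and> d = Z2 then -1
        else if c = Z22 \<and> d = Z12 then -1 else if c = Z12 \<and> d = Z22 then 1 else 0)
     else if b = Z11 \<and> f = Z22 then
       (if c = Z22 \<and> d = Z12 then 1 else if c = Z12 \<and> d = Z22 then -1 else 0)
     else if b = Z11 \<and> f = Z12 then
       (if c = Z22 \<and> d = Z12 then -1 else if c = Z12 \<and> d = Z22 then 1 else 0)
     else 0)"

lemma wedge_Fib_Fib_1:
  assumes z: "z \<in> Dom" and c: "c \<in> {Z1, Z11, Z12}" and d: "d \<in> {Z1, Z11, Z12}"
  shows "wedge c d z + (\<Sum>\<beta>\<in>{Z2, Z22}. \<Sum>\<phi>\<in>{Z1, Z11, Z12}. D1 \<beta> \<phi> c d * wedge \<beta> \<phi> z) = 0"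
  using c d by (auto simp: D1_def wedge_zero wedge_Z12_antisym wedge_relations(1,2)[OF z])

lemma wedge_Fib_Fib_2:
  assumes z: "z \<in> Dom" and c: "c \<in> {Z2, Z22, Z12}" and d: "d \<in> {Z2, Z22, Z12}"
  shows "wedge c d z + (\<Sum>\<beta>\<in>{Z1, Z11}. \<Sum>\<phi>\<in>{Z2, Z22, Z12}. D2 \<beta> \<phi> c d * wedge \<beta> \<phi> z) = 0"
  using c d by (auto simp: D2_def wedge_zero wedge_Z12_antisym wedge_relations(3,4)[OF z])

text \<open>Evaluating at six points of \<open>Dom\<close> gives a nonsingular linear system for the six
  coefficients.\<close>

lemma wedge_Base_Fib_indep_1:
  assumes H: "\<And>z. z \<in> Dom \<Longrightarrow> (\<Sum>\<beta>\<in>{Z2,Z22}. \<Sum>\<phi>\<in>{Z1,Z11,Z12}. r \<beta> \<phi> * wedge \<beta> \<phi> z) = 0"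
  shows "r Z2 Z1 = 0 \<and> r Z2 Z11 = 0 \<and> r Z2 Z12 = 0 \<and> r Z22 Z1 = 0 \<and> r Z22 Z11 = 0 \<and> r Z22 Z12 = 0"
proof -
  have e: "(\<Sum>\<beta>\<in>{Z2,Z22}. \<Sum>\<phi>\<in>{Z1,Z11,Z12}. r \<beta> \<phi> * wedge \<beta> \<phi> (a,b)) = 0"
    if "(a,b) \<in> {(2,2),(2,3),(2,-1),(3,2),(3,3),(3,-1)}" for a b
    by (rule H) (use that in \<open>auto simp: Dom_def\<close>)
  note e1 = e[of 2 2, simplified wedge_def, simplified]
  note e2 = e[of 2 3, simplified wedge_def, simplified]
  note e3 = e[of 2 "-1", simplified wedge_def, simplified]
  note e4 = e[of 3 2, simplified wedge_def, simplified]
  note e5 = e[of 3 3, simplified wedge_def, simplified]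
  note e6 = e[of 3 "-1", simplified wedge_def, simplified]
  note R = e1 e2 e3 e4 e5 e6
  have Re: "Re (r Z2 Z1) = 0 \<and> Re (r Z2 Z11) = 0 \<and> Re (r Z2 Z12) = 0 \<and> Re (r Z22 Z1) = 0 \<and> Re (r Z22 Z11) = 0 \<and> Re (r Z22 Z12) = 0"
    using R[THEN arg_cong[of _ _ Re]] by simp
  have Im: "Im (r Z2 Z1) = 0 \<and> Im (r Z2 Z11) = 0 \<and> Im (r Z2 Z12) = 0 \<and> Im (r Z22 Z1) = 0 \<and> Im (r Z22 Z11) = 0 \<and> Im (r Z22 Z12) = 0"
    using R[THEN arg_cong[of _ _ Im]] by simp
  show ?thesis using Re Im by (simp add: complex_eq_iff)
qed

lemma wedge_Base_Fib_indep_2: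
  assumes H: "\<And>z. z \<in> Dom \<Longrightarrow> (\<Sum>\<beta>\<in>{Z1,Z11}. \<Sum>\<phi>\<in>{Z2,Z22,Z12}. r \<beta> \<phi> * wedge \<beta> \<phi> z) = 0"
  shows "r Z1 Z2 = 0 \<and> r Z1 Z22 = 0 \<and> r Z1 Z12 = 0 \<and> r Z11 Z2 = 0 \<and> r Z11 Z22 = 0 \<and> r Z11 Z12 = 0"
proof -
  have e: "(\<Sum>\<beta>\<in>{Z1,Z11}. \<Sum>\<phi>\<in>{Z2,Z22,Z12}. r \<beta> \<phi> * wedge \<beta> \<phi> (a,b)) = 0"
    if "(a,b) \<in> {(2,2),(3,2),(-1,2),(2,3),(3,3),(-1,3)}" for a b
    by (rule H) (use that in \<open>auto simp: Dom_def\<close>)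
  note e1 = e[of 2 2, simplified wedge_def, simplified]
  note e2 = e[of 3 2, simplified wedge_def, simplified]
  note e3 = e[of "-1" 2, simplified wedge_def, simplified]
  note e4 = e[of 2 3, simplified wedge_def, simplified]
  note e5 = e[of 3 3, simplified wedge_def, simplified]
  note e6 = e[of "-1" 3, simplified wedge_def, simplified]
  note R = e1 e2 e3 e4 e5 e6
  have Re: "Re (r Z1 Z2) = 0 \<and> Re (r Z1 Z22) = 0 \<and> Re (r Z1 Z12) = 0 \<and> Re (r Z11 Z2) = 0 \<and> Re (r Z11 Z22) = 0 \<and> Re (r Z11 Z12) = 0"
    using R[THEN arg_cong[of _ _ Re]] by simp
  have Im: "Im (r Z1 Z2) = 0 \<and> Im (r Z1 Z22) = 0 \<and> Im (r Z1 Z12) = 0 \<and> Im (r Z11 Z2) = 0 \<and> Im (r Z11 Z22) = 0 \<and> Im (r Z11 Z12) = 0"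
    using R[THEN arg_cong[of _ _ Im]] by simp
  show ?thesis using Re Im by (simp add: complex_eq_iff)
qed

lemma pr1_12_char: "pr1_12 a = Some b \<longleftrightarrow> b \<in> {Z1, Z11, Z12a} \<and> a = swap12a b"
  by (cases a; cases b) auto

lemma pr2_12_char: "pr2_12 a = Some b \<longleftrightarrow> b \<in> {Z2, Z22} \<and> a = id b"
  by (cases a; cases b) auto

lemma pr2_21_char: "pr2_21 a = Some b \<longleftrightarrow> b \<in> {Z2, Z22, Z12b} \<and> a = swap12b b"
  by (cases a; cases b) auto

lemma pr1_21_char: "pr1_21 a = Some b \<longleftrightarrow> b \<in> {Z1, Z11} \<and> a = id b"
  by (cases a; cases b) auto

interpretation I1: fibration "{Z1, Z11, Z12}" "{Z2, Z22}" Z1 Z2 D1 "{Z1, Z11, Z12a}" swap12a pr1_12 pr2_12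
proof unfold_locales
  show "Aset = {Z1, Z11, Z12} \<union> {Z2, Z22}" by (auto simp: Aset_def)
  show "{Z1, Z11, Z12} \<inter> {Z2, Z22} = {}" by auto
  show "Z1 \<in> {Z1, Z11, Z12}" by simp
  show "Z2 \<in> {Z2, Z22}" by simp
  show "{Z1, Z2} = {Z1, Z2}" by simp
  show "\<And>\<beta> c d. D1 \<beta> Z1 c d = 0" by (simp add: D1_def)
  show "\<And>z c d. z \<in> Dom \<Longrightarrow> c \<in> {Z1, Z11, Z12} \<Longrightarrow> d \<in> {Z1, Z11, Z12} \<Longrightarrow>
        wedge c d z + (\<Sum>\<beta>\<in>{Z2, Z22}. \<Sum>\<phi>\<in>{Z1, Z11, Z12}. D1 \<beta> \<phi> c d * wedge \<beta> \<phi> z) = 0"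
    by (rule wedge_Fib_Fib_1)
  show "\<And>a b z. a \<in> {Z2, Z22} \<Longrightarrow> b \<in> {Z2, Z22} \<Longrightarrow> wedge a b z = 0"
    by (auto simp: wedge_zero)
  show "\<And>r \<beta> \<phi>. (\<And>z. z \<in> Dom \<Longrightarrow> (\<Sum>\<beta>\<in>{Z2, Z22}. \<Sum>\<phi>\<in>{Z1, Z11, Z12}. r \<beta> \<phi> * wedge \<beta> \<phi> z) = 0) \<Longrightarrow>
        \<beta> \<in> {Z2, Z22} \<Longrightarrow> \<phi> \<in> {Z1, Z11, Z12} \<Longrightarrow> r \<beta> \<phi> = 0"
    using wedge_Base_Fib_indep_1 by blast
  show "\<And>a. swap12a (swap12a a) = a" by (case_tac a) simp_all
  show "\<And>a. a \<in> {Z1, Z11, Z12a} \<Longrightarrow> swap12a a \<in> {Z1, Z11, Z12}" by auto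
  show "\<And>a. a \<in> {Z1, Z11, Z12} \<Longrightarrow> swap12a a \<in> {Z1, Z11, Z12a}" by auto
  show "swap12a Z1 = Z1" by simp
  show "Z2 \<notin> {Z1, Z11, Z12a}" by simp
  show "finite {Z1, Z11, Z12a}" by simp
  show "\<And>u p. mapw pr1_12 u = Some p \<longleftrightarrow> p \<in> lists {Z1, Z11, Z12a} \<and> u = map swap12a p"
    by (rule mapw_char[OF pr1_12_char])
  show "\<And>v q. mapw pr2_12 v = Some q \<longleftrightarrow> q \<in> lists {Z2, Z22} \<and> v = q"
    using mapw_char[OF pr2_12_char] by simp
qed

interpretation I2: fibration "{Z2, Z22, Z12}" "{Z1, Z11}" Z2 Z1 D2 "{Z2, Z22, Z12b}" swap12b pr2_21 pr1_21
proof unfold_locales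
  show "Aset = {Z2, Z22, Z12} \<union> {Z1, Z11}" by (auto simp: Aset_def)
  show "{Z2, Z22, Z12} \<inter> {Z1, Z11} = {}" by auto
  show "Z2 \<in> {Z2, Z22, Z12}" by simp
  show "Z1 \<in> {Z1, Z11}" by simp
  show "{Z1, Z2} = {Z2, Z1}" by auto
  show "\<And>\<beta> c d. D2 \<beta> Z2 c d = 0" by (simp add: D2_def)
  show "\<And>z c d. z \<in> Dom \<Longrightarrow> c \<in> {Z2, Z22, Z12} \<Longrightarrow> d \<in> {Z2, Z22, Z12} \<Longrightarrow>
        wedge c d z + (\<Sum>\<beta>\<in>{Z1, Z11}. \<Sum>\<phi>\<in>{Z2, Z22, Z12}. D2 \<beta> \<phi> c d * wedge \<beta> \<phi> z) = 0"
    by (rule wedge_Fib_Fib_2)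
  show "\<And>a b z. a \<in> {Z1, Z11} \<Longrightarrow> b \<in> {Z1, Z11} \<Longrightarrow> wedge a b z = 0"
    by (auto simp: wedge_zero)
  show "\<And>r \<beta> \<phi>. (\<And>z. z \<in> Dom \<Longrightarrow> (\<Sum>\<beta>\<in>{Z1, Z11}. \<Sum>\<phi>\<in>{Z2, Z22, Z12}. r \<beta> \<phi> * wedge \<beta> \<phi> z) = 0) \<Longrightarrow>
        \<beta> \<in> {Z1, Z11} \<Longrightarrow> \<phi> \<in> {Z2, Z22, Z12} \<Longrightarrow> r \<beta> \<phi> = 0"
    using wedge_Base_Fib_indep_2 by blast
  show "\<And>a. swap12b (swap12b a) = a" by (case_tac a) simp_all
  show "\<And>a. a \<in> {Z2, Z22, Z12b} \<Longrightarrow> swap12b a \<in> {Z2, Z22, Z12}" by auto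
  show "\<And>a. a \<in> {Z2, Z22, Z12} \<Longrightarrow> swap12b a \<in> {Z2, Z22, Z12b}" by auto
  show "swap12b Z2 = Z2" by simp
  show "Z1 \<notin> {Z2, Z22, Z12b}" by simp
  show "finite {Z2, Z22, Z12b}" by simp
  show "\<And>u p. mapw pr2_21 u = Some p \<longleftrightarrow> p \<in> lists {Z2, Z22, Z12b} \<and> u = map swap12b p"
    by (rule mapw_char[OF pr2_21_char])
  show "\<And>v q. mapw pr1_21 v = Some q \<longleftrightarrow> q \<in> lists {Z1, Z11} \<and> v = q"
    using mapw_char[OF pr1_21_char] by simp
qed

theorem corollary5p9:
  shows "unit_S \<in> B0_space
    \<and> (\<forall>x\<in>B0_space. \<forall>y\<in>B0_space. shuffle x y \<in> B0_space)
    \<and> bij_betw (iota pr1_12 pr2_12) B0_space (tensor_S0 {Z1, Z11, Z12a} {Z2, Z22})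
    \<and> iota pr1_12 pr2_12 unit_S = unit_T
    \<and> (\<forall>x\<in>B0_space. \<forall>y\<in>B0_space.
         iota pr1_12 pr2_12 (shuffle x y) = tshuffle (iota pr1_12 pr2_12 x) (iota pr1_12 pr2_12 y))
    \<and> bij_betw (iota pr2_21 pr1_21) B0_space (tensor_S0 {Z2, Z22, Z12b} {Z1, Z11})
    \<and> iota pr2_21 pr1_21 unit_S = unit_T
    \<and> (\<forall>x\<in>B0_space. \<forall>y\<in>B0_space.
         iota pr2_21 pr1_21 (shuffle x y) = tshuffle (iota pr2_21 pr1_21 x) (iota pr2_21 pr1_21 y))"
  using unit_S_in_B0_space shuffle_in_B0_space I1.iota_shuffle_iso I2.iota_shuffle_iso by blast

end
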